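(* Let $p,g_i,S,d,R,\eta_i,\beta$ be as in the context and let $h$ be the form defined there in the variables $z=(z_1,\dots,z_{n+m+3})=(x_1,\dots,x_n,s_0,\dots,s_{m+1},y)$. Then $p(x)>0$ for all $x\in S$ if and only if there exists a positive integer $r$ such that the polynomial in $(v,w)\in\mathbb{R}^{2(n+m+3)}$ $$\Big(h(v^2-w^2)-\tfrac1r\Big(\sum_{i=1}^{n+m+3}(v_i^2-w_i^2)^2\Big)^{2d}+\tfrac{1}{2r}\Big(\sum_{i=1}^{n+m+3}(v_i^4+w_i^4)\Big)^{2d}\Big)\cdot\Big(\sum_{i=1}^{n+m+3}v_i^2+\sum_{i=1}^{n+m+3}w_i^2\Big)^{r^2}$$ has nonnegative coefficients.
   Context: Let $p,g_1,\dots,g_m$ be real polynomials in $x=(x_1,\dots,x_n)$ and let $S=\{x\in\mathbb{R}^n : g_i(x)\ge 0,\ i=1,\dots,m\}$. Let $d\ge 1$ be the integer such that $2d$ is the smallest even integer larger than or equal to the maximum of the degrees of $p,g_1,\dots,g_m$. Assume there is $R>0$ with $\sum_{i=1}^n x_i^2\le R$ for all $x\in S$. Let $\eta_1,\dots,\eta_m$ be real numbers with $g_i(x)\le\eta_i$ for all $x\in S$, and let $\beta$ be a real number with $-p(x)\le\beta$ for all $x\in S$. For a polynomial $q$ in $x$ of degree at most $2d$, $y^{2d}q(x/y)$ denotes its homogenization to a form of degree $2d$ in $(x,y)$. Define $$h(x,s,y)=\big(y^{2d}p(x/y)+s_0^2y^{2d-2}\big)^2+\sum_{i=1}^m\big(y^{2d}g_i(x/y)-s_i^2y^{2d-2}\big)^2+\Big(\big(R+\textstyle\sum_{i=1}^m\eta_i+\beta\big)^d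 y^{2d}-\big(\sum_{i=1}^n x_i^2+\sum_{i=0}^m s_i^2\big)^d-s_{m+1}^{2d}\Big)^2,$$ a form of degree $4d$. $h(v^2-w^2)$ denotes $h$ evaluated at $z_i=v_i^2-w_i^2$, $i=1,\dots,n+m+3$. (The exponent $2d$ on the two added terms makes all terms homogeneous of degree $8d$; the paper's printed exponent $d$ is a typo.) *)

theory Defs
  imports Complex_Main "HOL-Library.Poly_Mapping"
begin

type_synonym mpoly = "(nat \<Rightarrow>\<^sub>0 nat) \<Rightarrow>\<^sub>0 real"

definition mon_deg :: "(nat \<Rightarrow>\<^sub>0 nat) \<Rightarrow> nat" where
  "mon_deg \<alpha> = (\<Sum>i\<in>Poly_Mapping.keys \<alpha>. Poly_Mapping.lookup \<alpha> i)"

definition total_deg :: "mpoly \<Rightarrow> nat" where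
  "total_deg q = Max (insert 0 (mon_deg ` Poly_Mapping.keys q))"

definition const :: "real \<Rightarrow> mpoly" where
  "const c = Poly_Mapping.single 0 c"

definition var :: "nat \<Rightarrow> mpoly" where
  "var i = Poly_Mapping.single (Poly_Mapping.single i 1) 1"

definition eval :: "mpoly \<Rightarrow> (nat \<Rightarrow> real) \<Rightarrow> real" where
  "eval q x = (\<Sum>\<alpha>\<in>Poly_Mapping.keys q. Poly_Mapping.lookup q \<alpha> * (\<Prod>i\<in>Poly_Mapping.keys \<alpha>. x i ^ Poly_Mapping.lookup \<alpha> i))"

definition subst :: "mpoly \<Rightarrow> (nat \<Rightarrow> mpoly) \<Rightarrow> mpoly" where
  "subst q \<sigma> = (\<Sum>\<alpha>\<in>Poly_Mapping.keys q. const (Poly_Mapping.lookup q \<alpha>) * (\<Prod>i\<in>Poly_Mapping.keys \<alpha>. \<sigma> i ^ Poly_Mapping.lookup \<alpha> i))"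

text \<open>homogenization y^k q(x/y) of a polynomial q of degree <= k, as a polynomial
  in the variables var 0 .. (variables of q) and the variable Y\<close>
definition homog :: "nat \<Rightarrow> mpoly \<Rightarrow> mpoly \<Rightarrow> mpoly" where
  "homog k q Y = (\<Sum>\<alpha>\<in>Poly_Mapping.keys q. const (Poly_Mapping.lookup q \<alpha>) * (\<Prod>i\<in>Poly_Mapping.keys \<alpha>. var i ^ Poly_Mapping.lookup \<alpha> i)
                     * Y ^ (k - mon_deg \<alpha>))"

text \<open>The semialgebraic set S in R^n (points as functions vanishing beyond index n-1);
  the constraints g_1..g_m are g 1, ..., g m.\<close>
definition semialg :: "nat \<Rightarrow> nat \<Rightarrow> (nat \<Rightarrow> mpoly) \<Rightarrow> (nat \<Rightarrow> real) set" where
  "semialg n m g = {x. (\<forall>i\<ge>n. x i = 0) \<and> (\<forall>i\<in>{1..m}. 0 \<le> eval (g i) x)}"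

text \<open>The form h in z = (x_1..x_n, s_0..s_{m+1}, y), with x_j = var (j-1),
  s_i = var (n+i), y = var (n+m+2).\<close>
definition hform :: "nat \<Rightarrow> nat \<Rightarrow> nat \<Rightarrow> mpoly \<Rightarrow> (nat \<Rightarrow> mpoly) \<Rightarrow> real \<Rightarrow> (nat \<Rightarrow> real) \<Rightarrow> real \<Rightarrow> mpoly" where
  "hform n m d p g R \<eta> \<beta> =
    (let y = var (n+m+2); s = (\<lambda>i. var (n+i)) in
      (homog (2*d) p y + s 0 ^ 2 * y ^ (2*d-2)) ^ 2
      + (\<Sum>i=1..m. (homog (2*d) (g i) y - s i ^ 2 * y ^ (2*d-2)) ^ 2)
      + (const ((R + (\<Sum>i=1..m. \<eta> i) + \<beta>) ^ d) * y ^ (2*d)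
          - ((\<Sum>j<n. var j ^ 2) + (\<Sum>i=0..m. s i ^ 2)) ^ d
          - s (m+1) ^ (2*d)) ^ 2)"

text \<open>In the (v,w) polynomial ring: v_i = var (2 i), w_i = var (2 i + 1), i = 0..N-1
  (0-based index for z_{i+1}).\<close>
definition vv :: "nat \<Rightarrow> mpoly" where "vv i = var (2*i)"
definition ww :: "nat \<Rightarrow> mpoly" where "ww i = var (2*i+1)"

definition certificate :: "nat \<Rightarrow> nat \<Rightarrow> nat \<Rightarrow> mpoly \<Rightarrow> (nat \<Rightarrow> mpoly) \<Rightarrow> real \<Rightarrow> (nat \<Rightarrow> real) \<Rightarrow> real \<Rightarrow> nat \<Rightarrow> mpoly" where
  "certificate n m d p g R \<eta> \<beta> r =
    (let N = n+m+3; z = (\<lambda>i. vv i ^ 2 - ww i ^ 2) in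
      (subst (hform n m d p g R \<eta> \<beta>) z
        - const (1 / real r) * (\<Sum>i<N. z i ^ 2) ^ (2*d)
        + const (1 / (2 * real r)) * (\<Sum>i<N. vv i ^ 4 + ww i ^ 4) ^ (2*d))
      * ((\<Sum>i<N. vv i ^ 2) + (\<Sum>i<N. ww i ^ 2)) ^ (r^2))"

end

theory Submission
  imports Defs "HOL-Analysis.Analysis"
begin

text \<open>
  If \<open>p > 0\<close> on \<open>S\<close>, then \<open>h\<close> is a form of degree \<open>4d\<close> that is positive away from the origin:
  a zero with \<open>y \<noteq> 0\<close> dehomogenizes to a point of \<open>S\<close> where \<open>p = -s\<^sub>0\<^sup>2 \<le> 0\<close>, and a zero with
  \<open>y = 0\<close> forces all other variables to vanish through the last square.  Hence
  \<open>h(z) \<ge> c |z|\<^sup>4\<^sup>d\<close> for some \<open>c > 0\<close>, so the perturbation by \<open>1/r\<close> keeps \<open>h(v\<^sup>2-w\<^sup>2)\<close> strictly positive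
  on the simplex in \<open>(v,w)\<close>, with a coefficient sum bounded independently of \<open>r\<close>.  Polya's
  theorem with an explicit exponent (\<open>(\<Sigma> x\<^sub>i)\<^sup>M G\<close> has nonnegative coefficients once \<open>M + D\<close>
  dominates \<open>L D\<^sup>2 / \<mu>\<close>, for \<open>L\<close> the coefficient sum and \<open>\<mu>\<close> the minimum of \<open>G\<close> on the simplex)
  then gives the certificate for large \<open>r\<close>, after substituting squares for the variables.

  Conversely, a point of \<open>S\<close> with \<open>p \<le> 0\<close> yields a real zero of \<open>h\<close> with \<open>y = 1\<close>; splitting
  every coordinate into \<open>v\<^sup>2 - w\<^sup>2\<close> with \<open>v\<^sub>iw\<^sub>i = 0\<close> makes the certificate negative there,
  which is impossible for a polynomial with nonnegative coefficients.
\<close>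

definition monom_val :: "(nat \<Rightarrow> 'b::comm_semiring_1) \<Rightarrow> (nat \<Rightarrow>\<^sub>0 nat) \<Rightarrow> 'b" where
  "monom_val \<phi> \<alpha> = (\<Prod>i\<in>Poly_Mapping.keys \<alpha>. \<phi> i ^ Poly_Mapping.lookup \<alpha> i)"

lemma monom_val_superset:
  assumes "finite A" "Poly_Mapping.keys \<alpha> \<subseteq> A"
  shows "monom_val \<phi> \<alpha> = (\<Prod>i\<in>A. \<phi> i ^ Poly_Mapping.lookup \<alpha> i)"
  unfolding monom_val_def
  by (rule prod.mono_neutral_left) (use assms in \<open>auto simp: in_keys_iff\<close>)

lemma monom_val_add: "monom_val \<phi> (\<alpha> + \<beta>) = monom_val \<phi> \<alpha> * monom_val \<phi> \<beta>"
proof -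
  let ?A = "Poly_Mapping.keys \<alpha> \<union> Poly_Mapping.keys \<beta>"
  have "monom_val \<phi> (\<alpha> + \<beta>) = (\<Prod>i\<in>?A. \<phi> i ^ Poly_Mapping.lookup (\<alpha> + \<beta>) i)"
    by (rule monom_val_superset) (auto dest: keys_add[THEN subsetD])
  also have "\<dots> = (\<Prod>i\<in>?A. \<phi> i ^ Poly_Mapping.lookup \<alpha> i) * (\<Prod>i\<in>?A. \<phi> i ^ Poly_Mapping.lookup \<beta> i)"
    by (simp add: lookup_add power_add prod.distrib)
  also have "\<dots> = monom_val \<phi> \<alpha> * monom_val \<phi> \<beta>"
    by (subst (1 2) monom_val_superset[of ?A]) auto
  finally show ?thesis .
qed

lemma monom_val_zero [simp]: "monom_val \<phi> 0 = 1"
  by (simp add: monom_val_def)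

lemma monom_val_single [simp]: "monom_val \<phi> (Poly_Mapping.single i k) = \<phi> i ^ k"
  by (simp add: monom_val_def)

definition real_ring_hom :: "(real \<Rightarrow> 'b::comm_ring_1) \<Rightarrow> bool" where
  "real_ring_hom f \<longleftrightarrow> (\<forall>a b. f (a + b) = f a + f b) \<and> (\<forall>a b. f (a * b) = f a * f b) \<and> f 1 = 1"

lemma real_ring_hom_add: "real_ring_hom f \<Longrightarrow> f (a + b) = f a + f b"
  by (simp add: real_ring_hom_def)

lemma real_ring_hom_mult: "real_ring_hom f \<Longrightarrow> f (a * b) = f a * f b"
  by (simp add: real_ring_hom_def)

lemma real_ring_hom_one: "real_ring_hom f \<Longrightarrow> f 1 = 1"
  by (simp add: real_ring_hom_def)

lemma real_ring_hom_zero: "real_ring_hom f \<Longrightarrow> f 0 = 0"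
  using real_ring_hom_add[of f 0 0] by simp

lemma real_ring_hom_uminus: "real_ring_hom f \<Longrightarrow> f (- a) = - f a"
  using real_ring_hom_add[of f a "- a"] real_ring_hom_zero[of f]
  by (simp add: eq_neg_iff_add_eq_0 add.commute)

lemma poly_mapping_expansion:
  "q = (\<Sum>\<alpha>\<in>Poly_Mapping.keys q. Poly_Mapping.single \<alpha> (Poly_Mapping.lookup q \<alpha>))"
proof (rule poly_mapping_eqI)
  fix k
  show "Poly_Mapping.lookup q k =
    Poly_Mapping.lookup (\<Sum>\<alpha>\<in>Poly_Mapping.keys q. Poly_Mapping.single \<alpha> (Poly_Mapping.lookup q \<alpha>)) k"
    by (cases "k \<in> Poly_Mapping.keys q") (auto simp: lookup_sum lookup_single when_def in_keys_iff)
qed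

lemma mult_expansion:
  "(p::mpoly) * q = (\<Sum>\<alpha>\<in>Poly_Mapping.keys p. \<Sum>\<beta>\<in>Poly_Mapping.keys q.
     Poly_Mapping.single (\<alpha> + \<beta>) (Poly_Mapping.lookup p \<alpha> * Poly_Mapping.lookup q \<beta>))"
proof -
  have "p * q = (\<Sum>\<alpha>\<in>Poly_Mapping.keys p. Poly_Mapping.single \<alpha> (Poly_Mapping.lookup p \<alpha>)) *
                (\<Sum>\<beta>\<in>Poly_Mapping.keys q. Poly_Mapping.single \<beta> (Poly_Mapping.lookup q \<beta>))"
    by (subst (1) poly_mapping_expansion, subst (2) poly_mapping_expansion) (rule refl)
  then show ?thesis by (simp add: sum_product mult_single)
qed

text \<open>Evaluation with coefficient map \<open>f\<close>: \<open>eval\<close> and \<open>subst\<close> are the cases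
  \<open>f = id\<close> and \<open>f = const\<close>, so that their algebraic laws are proved once.\<close>

definition peval :: "(real \<Rightarrow> 'b::comm_ring_1) \<Rightarrow> (nat \<Rightarrow> 'b) \<Rightarrow> mpoly \<Rightarrow> 'b" where
  "peval f \<phi> q = (\<Sum>\<alpha>\<in>Poly_Mapping.keys q. f (Poly_Mapping.lookup q \<alpha>) * monom_val \<phi> \<alpha>)"

lemma peval_zero: "peval f \<phi> 0 = 0"
  by (simp add: peval_def)

context
  fixes f :: "real \<Rightarrow> 'b::comm_ring_1"
  assumes f: "real_ring_hom f"
begin

lemma peval_superset:
  assumes "finite A" "Poly_Mapping.keys q \<subseteq> A"
  shows "peval f \<phi> q = (\<Sum>\<alpha>\<in>A. f (Poly_Mapping.lookup q \<alpha>) * monom_val \<phi> \<alpha>)"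
  unfolding peval_def
  by (rule sum.mono_neutral_left) (use assms f in \<open>auto simp: in_keys_iff real_ring_hom_zero\<close>)

lemma peval_add: "peval f \<phi> (p + q) = peval f \<phi> p + peval f \<phi> q"
proof -
  let ?A = "Poly_Mapping.keys p \<union> Poly_Mapping.keys q"
  have "peval f \<phi> (p + q) = (\<Sum>\<alpha>\<in>?A. f (Poly_Mapping.lookup (p + q) \<alpha>) * monom_val \<phi> \<alpha>)"
    by (rule peval_superset) (auto dest: keys_add[THEN subsetD])
  also have "\<dots> = (\<Sum>\<alpha>\<in>?A. f (Poly_Mapping.lookup p \<alpha>) * monom_val \<phi> \<alpha>)
                + (\<Sum>\<alpha>\<in>?A. f (Poly_Mapping.lookup q \<alpha>) * monom_val \<phi> \<alpha>)"
    by (simp add: lookup_add real_ring_hom_add[OF f] distrib_right sum.distrib)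
  also have "\<dots> = peval f \<phi> p + peval f \<phi> q"
    by (subst (1 2) peval_superset[of ?A]) auto
  finally show ?thesis .
qed

lemma peval_uminus: "peval f \<phi> (- p) = - peval f \<phi> p"
  unfolding peval_def by (simp add: real_ring_hom_uminus[OF f] sum_negf)

lemma peval_diff: "peval f \<phi> (p - q) = peval f \<phi> p - peval f \<phi> q"
  using peval_add[of \<phi> p "- q"] peval_uminus[of \<phi> q] by simp

lemma peval_single: "peval f \<phi> (Poly_Mapping.single \<alpha> c) = f c * monom_val \<phi> \<alpha>"
  by (cases "c = 0") (auto simp: peval_def real_ring_hom_zero[OF f])

lemma peval_sum: "peval f \<phi> (sum P I) = (\<Sum>i\<in>I. peval f \<phi> (P i))"
  by (induction I rule: infinite_finite_induct) (auto simp: peval_add peval_zero)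

lemma peval_mult: "peval f \<phi> (p * q) = peval f \<phi> p * peval f \<phi> q"
proof -
  have "peval f \<phi> (p * q) = (\<Sum>\<alpha>\<in>Poly_Mapping.keys p. \<Sum>\<beta>\<in>Poly_Mapping.keys q.
      (f (Poly_Mapping.lookup p \<alpha>) * monom_val \<phi> \<alpha>) * (f (Poly_Mapping.lookup q \<beta>) * monom_val \<phi> \<beta>))"
    by (subst mult_expansion)
       (simp add: peval_sum peval_single real_ring_hom_mult[OF f] monom_val_add mult_ac)
  also have "\<dots> = peval f \<phi> p * peval f \<phi> q"
    by (simp add: peval_def sum_product)
  finally show ?thesis .
qed

lemma peval_one: "peval f \<phi> 1 = 1"
  using peval_single[of \<phi> 0 1] by (simp add: real_ring_hom_one[OF f])

lemma peval_power: "peval f \<phi> (p ^ k) = peval f \<phi> p ^ k"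
  by (induction k) (auto simp: peval_one peval_mult)

lemma peval_prod: "peval f \<phi> (prod P I) = (\<Prod>i\<in>I. peval f \<phi> (P i))"
  by (induction I rule: infinite_finite_induct) (auto simp: peval_one peval_mult)

lemma peval_const: "peval f \<phi> (const c) = f c"
  using peval_single[of \<phi> 0 c] by (simp add: const_def)

lemma peval_var: "peval f \<phi> (var i) = \<phi> i"
  using peval_single[of \<phi> "Poly_Mapping.single i 1" 1] by (simp add: var_def real_ring_hom_one[OF f])

lemma peval_monom_val: "peval f \<tau> (monom_val \<sigma> \<alpha>) = monom_val (\<lambda>i. peval f \<tau> (\<sigma> i)) \<alpha>"
  by (simp add: monom_val_def peval_prod peval_power)

end

lemma peval_peval:
  assumes "real_ring_hom f" "real_ring_hom g"
  shows "peval g \<tau> (peval f \<sigma> q) = peval (\<lambda>c. peval g \<tau> (f c)) (\<lambda>i. peval g \<tau> (\<sigma> i)) q"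
  by (simp add: peval_def[of f] peval_sum[OF assms(2)] peval_mult[OF assms(2)] peval_monom_val[OF assms(2)])
     (simp add: peval_def)

lemma real_ring_hom_id: "real_ring_hom (\<lambda>c. c)"
  by (simp add: real_ring_hom_def)

lemma real_ring_hom_const: "real_ring_hom const"
  by (simp add: real_ring_hom_def const_def single_add mult_single)

lemma eval_eq_peval: "eval q x = peval (\<lambda>c. c) x q"
  by (simp add: eval_def peval_def monom_val_def)

lemma subst_eq_peval: "subst q \<sigma> = peval const \<sigma> q"
  by (simp add: subst_def peval_def monom_val_def)

lemma eval_subst: "eval (subst q \<sigma>) x = eval q (\<lambda>i. eval (\<sigma> i) x)"
  unfolding eval_eq_peval subst_eq_peval
  by (simp add: peval_peval[OF real_ring_hom_const real_ring_hom_id] peval_const[OF real_ring_hom_id])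

lemma subst_subst: "subst (subst q \<sigma>) \<tau> = subst q (\<lambda>i. subst (\<sigma> i) \<tau>)"
  unfolding subst_eq_peval
  by (simp add: peval_peval[OF real_ring_hom_const real_ring_hom_const] peval_const[OF real_ring_hom_const])

lemmas peval_rules = peval_add peval_diff peval_mult peval_power peval_sum peval_prod peval_const peval_var

lemma eval_add [simp]: "eval (p + q) x = eval p x + eval q x"
  and eval_diff [simp]: "eval (p - q) x = eval p x - eval q x"
  and eval_mult [simp]: "eval (p * q) x = eval p x * eval q x"
  and eval_power [simp]: "eval (p ^ k) x = eval p x ^ k"
  and eval_sum [simp]: "eval (sum P I) x = (\<Sum>i\<in>I. eval (P i) x)"
  and eval_prod [simp]: "eval (prod P I) x = (\<Prod>i\<in>I. eval (P i) x)"
  and eval_const [simp]: "eval (const c) x = c"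
  and eval_var [simp]: "eval (var i) x = x i"
  by (simp_all add: eval_eq_peval peval_rules[OF real_ring_hom_id])

lemma subst_add [simp]: "subst (p + q) \<sigma> = subst p \<sigma> + subst q \<sigma>"
  and subst_diff [simp]: "subst (p - q) \<sigma> = subst p \<sigma> - subst q \<sigma>"
  and subst_mult [simp]: "subst (p * q) \<sigma> = subst p \<sigma> * subst q \<sigma>"
  and subst_power [simp]: "subst (p ^ k) \<sigma> = subst p \<sigma> ^ k"
  and subst_sum [simp]: "subst (sum P I) \<sigma> = (\<Sum>i\<in>I. subst (P i) \<sigma>)"
  and subst_const [simp]: "subst (const c) \<sigma> = const c"
  and subst_var [simp]: "subst (var i) \<sigma> = \<sigma> i"
  by (simp_all add: subst_eq_peval peval_rules[OF real_ring_hom_const])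


definition nonneg_coeffs :: "mpoly \<Rightarrow> bool" where
  "nonneg_coeffs q \<longleftrightarrow> (\<forall>\<alpha>. 0 \<le> Poly_Mapping.lookup q \<alpha>)"

lemma nonneg_coeffs_sum: "(\<And>i. i \<in> I \<Longrightarrow> nonneg_coeffs (P i)) \<Longrightarrow> nonneg_coeffs (sum P I)"
  by (simp add: nonneg_coeffs_def lookup_sum sum_nonneg)

lemma nonneg_coeffs_single: "0 \<le> c \<Longrightarrow> nonneg_coeffs (Poly_Mapping.single \<alpha> c)"
  by (simp add: nonneg_coeffs_def lookup_single when_def)

lemma nonneg_coeffs_mult: "nonneg_coeffs p \<Longrightarrow> nonneg_coeffs q \<Longrightarrow> nonneg_coeffs (p * q)"
  by (subst mult_expansion) (intro nonneg_coeffs_sum nonneg_coeffs_single, auto simp: nonneg_coeffs_def)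

lemma nonneg_coeffs_one: "nonneg_coeffs 1"
  by (simp add: nonneg_coeffs_def lookup_one when_def)

lemma nonneg_coeffs_power: "nonneg_coeffs p \<Longrightarrow> nonneg_coeffs (p ^ k)"
  by (induction k) (auto intro: nonneg_coeffs_mult nonneg_coeffs_one)

lemma nonneg_coeffs_prod: "(\<And>i. i \<in> I \<Longrightarrow> nonneg_coeffs (P i)) \<Longrightarrow> nonneg_coeffs (prod P I)"
  by (induction I rule: infinite_finite_induct) (auto intro: nonneg_coeffs_mult nonneg_coeffs_one)

lemma nonneg_coeffs_const: "0 \<le> c \<Longrightarrow> nonneg_coeffs (const c)"
  by (simp add: const_def nonneg_coeffs_single)

lemma nonneg_coeffs_var: "nonneg_coeffs (var i)"
  by (simp add: var_def nonneg_coeffs_single)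

lemma nonneg_coeffs_subst:
  assumes "nonneg_coeffs q" "\<And>i. nonneg_coeffs (\<sigma> i)"
  shows "nonneg_coeffs (subst q \<sigma>)"
  unfolding subst_def
  by (intro nonneg_coeffs_sum nonneg_coeffs_mult nonneg_coeffs_const nonneg_coeffs_prod nonneg_coeffs_power)
     (use assms in \<open>auto simp: nonneg_coeffs_def\<close>)

lemma eval_nonneg_if_nonneg_coeffs:
  assumes "nonneg_coeffs q" "\<And>i. 0 \<le> x i"
  shows "0 \<le> eval q x"
  unfolding eval_def using assms
  by (auto simp: nonneg_coeffs_def intro!: sum_nonneg mult_nonneg_nonneg prod_nonneg)

definition homogeneous :: "nat \<Rightarrow> nat set \<Rightarrow> mpoly \<Rightarrow> bool" where
  "homogeneous D V q \<longleftrightarrow> (\<forall>\<alpha>\<in>Poly_Mapping.keys q. mon_deg \<alpha> = D \<and> Poly_Mapping.keys \<alpha> \<subseteq> V)"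

lemma mon_deg_superset:
  "finite A \<Longrightarrow> Poly_Mapping.keys \<alpha> \<subseteq> A \<Longrightarrow> mon_deg \<alpha> = (\<Sum>i\<in>A. Poly_Mapping.lookup \<alpha> i)"
  unfolding mon_deg_def by (rule sum.mono_neutral_left) (auto simp: in_keys_iff)

lemma mon_deg_add: "mon_deg (\<alpha> + \<beta>) = mon_deg \<alpha> + mon_deg \<beta>"
proof -
  let ?A = "Poly_Mapping.keys \<alpha> \<union> Poly_Mapping.keys \<beta>"
  have "mon_deg (\<alpha> + \<beta>) = (\<Sum>i\<in>?A. Poly_Mapping.lookup (\<alpha> + \<beta>) i)"
    by (rule mon_deg_superset) (auto dest: keys_add[THEN subsetD])
  also have "\<dots> = (\<Sum>i\<in>?A. Poly_Mapping.lookup \<alpha> i) + (\<Sum>i\<in>?A. Poly_Mapping.lookup \<beta> i)"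
    by (simp add: lookup_add sum.distrib)
  also have "\<dots> = mon_deg \<alpha> + mon_deg \<beta>"
    by (subst (1 2) mon_deg_superset[of ?A]) auto
  finally show ?thesis .
qed

lemma mon_deg_zero [simp]: "mon_deg 0 = 0"
  by (simp add: mon_deg_def)

lemma mon_deg_single [simp]: "mon_deg (Poly_Mapping.single i k) = k"
  by (simp add: mon_deg_def)

lemma mon_deg_le_total_deg: "\<alpha> \<in> Poly_Mapping.keys q \<Longrightarrow> mon_deg \<alpha> \<le> total_deg q"
  unfolding total_deg_def by (rule Max_ge) auto

lemma homogeneous_zero: "homogeneous D V 0"
  by (simp add: homogeneous_def)

lemma homogeneous_add: "homogeneous D V p \<Longrightarrow> homogeneous D V q \<Longrightarrow> homogeneous D V (p + q)"
  unfolding homogeneous_def by (auto dest: keys_add[THEN subsetD])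

lemma homogeneous_uminus: "homogeneous D V p \<Longrightarrow> homogeneous D V (- p)"
  unfolding homogeneous_def by simp

lemma homogeneous_diff: "homogeneous D V p \<Longrightarrow> homogeneous D V q \<Longrightarrow> homogeneous D V (p - q)"
  using homogeneous_add[of D V p "- q"] homogeneous_uminus[of D V q] by simp

lemma homogeneous_sum: "(\<And>i. i \<in> I \<Longrightarrow> homogeneous D V (P i)) \<Longrightarrow> homogeneous D V (sum P I)"
  by (induction I rule: infinite_finite_induct) (simp_all add: homogeneous_add homogeneous_zero)

lemma homogeneous_mult:
  assumes "homogeneous D1 V p" "homogeneous D2 V q"
  shows "homogeneous (D1 + D2) V (p * q)"
  unfolding homogeneous_def
proof
  fix \<gamma> assume "\<gamma> \<in> Poly_Mapping.keys (p * q)"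
  then obtain a b where "\<gamma> = a + b" "a \<in> Poly_Mapping.keys p" "b \<in> Poly_Mapping.keys q"
    using keys_mult by blast
  moreover have "Poly_Mapping.keys (a + b) \<subseteq> Poly_Mapping.keys a \<union> Poly_Mapping.keys b"
    by (rule keys_add)
  ultimately show "mon_deg \<gamma> = D1 + D2 \<and> Poly_Mapping.keys \<gamma> \<subseteq> V"
    using assms by (auto simp: homogeneous_def mon_deg_add)
qed

lemma homogeneous_one: "homogeneous 0 V 1"
  by (simp add: homogeneous_def)

lemma homogeneous_power: "homogeneous D V p \<Longrightarrow> homogeneous (D * k) V (p ^ k)"
proof (induction k)
  case 0
  then show ?case by (simp add: homogeneous_one)
next
  case (Suc k)
  then show ?case using homogeneous_mult[of D V p "D * k" "p ^ k"] by (simp add: add.commute)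
qed

lemma homogeneous_prod:
  "(\<And>i. i \<in> I \<Longrightarrow> homogeneous (d i) V (P i)) \<Longrightarrow> homogeneous (sum d I) V (prod P I)"
  by (induction I rule: infinite_finite_induct) (auto intro: homogeneous_mult homogeneous_one)

lemma homogeneous_const: "homogeneous 0 V (const c)"
  by (simp add: homogeneous_def const_def)

lemma homogeneous_var: "i \<in> V \<Longrightarrow> homogeneous 1 V (var i)"
  by (simp add: homogeneous_def var_def)

lemma homogeneous_const_mult: "homogeneous D V q \<Longrightarrow> homogeneous D V (const c * q)"
  using homogeneous_mult[OF homogeneous_const] by fastforce

lemma homogeneous_var_power: "i \<in> V \<Longrightarrow> homogeneous k V (var i ^ k)"
  using homogeneous_power[OF homogeneous_var, of i V k] by simp

lemma homogeneous_square: "homogeneous D V q \<Longrightarrow> homogeneous (2 * D) V (q ^ 2)"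
  using homogeneous_power[of D V q 2] by (simp add: mult.commute)

lemma homogeneous_monomial:
  assumes "\<And>i. i \<in> Poly_Mapping.keys \<alpha> \<Longrightarrow> homogeneous 1 W (\<sigma> i)"
  shows "homogeneous (mon_deg \<alpha>) W (\<Prod>i\<in>Poly_Mapping.keys \<alpha>. \<sigma> i ^ Poly_Mapping.lookup \<alpha> i)"
proof -
  have "homogeneous (\<Sum>i\<in>Poly_Mapping.keys \<alpha>. 1 * Poly_Mapping.lookup \<alpha> i) W
      (\<Prod>i\<in>Poly_Mapping.keys \<alpha>. \<sigma> i ^ Poly_Mapping.lookup \<alpha> i)"
    by (intro homogeneous_prod homogeneous_power assms)
  then show ?thesis
    by (simp add: mon_deg_def)
qed

lemma homogeneous_subst:
  assumes "homogeneous D V q" "\<And>i. i \<in> V \<Longrightarrow> homogeneous 1 W (\<sigma> i)"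
  shows "homogeneous D W (subst q \<sigma>)"
  unfolding subst_def
proof (intro homogeneous_sum homogeneous_const_mult)
  fix \<alpha> assume "\<alpha> \<in> Poly_Mapping.keys q"
  then have "mon_deg \<alpha> = D" "Poly_Mapping.keys \<alpha> \<subseteq> V"
    using assms(1) by (auto simp: homogeneous_def)
  then show "homogeneous D W (\<Prod>i\<in>Poly_Mapping.keys \<alpha>. \<sigma> i ^ Poly_Mapping.lookup \<alpha> i)"
    using homogeneous_monomial[of \<alpha> W \<sigma>] assms(2) by auto
qed

lemma homogeneous_homog:
  assumes "\<forall>\<alpha>\<in>Poly_Mapping.keys q. Poly_Mapping.keys \<alpha> \<subseteq> V \<and> mon_deg \<alpha> \<le> k" "y \<in> V"
  shows "homogeneous k V (homog k q (var y))"
  unfolding homog_def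
proof (intro homogeneous_sum)
  fix \<alpha> assume "\<alpha> \<in> Poly_Mapping.keys q"
  then have keys: "Poly_Mapping.keys \<alpha> \<subseteq> V" and deg: "mon_deg \<alpha> \<le> k"
    using assms by auto
  have "homogeneous (mon_deg \<alpha> + 1 * (k - mon_deg \<alpha>)) V
      ((\<Prod>i\<in>Poly_Mapping.keys \<alpha>. var i ^ Poly_Mapping.lookup \<alpha> i) * var y ^ (k - mon_deg \<alpha>))"
    by (intro homogeneous_mult homogeneous_monomial homogeneous_power homogeneous_var assms(2))
       (use keys in auto)
  then show "homogeneous k V (const (Poly_Mapping.lookup q \<alpha>) *
      (\<Prod>i\<in>Poly_Mapping.keys \<alpha>. var i ^ Poly_Mapping.lookup \<alpha> i) * var y ^ (k - mon_deg \<alpha>))"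
    using deg homogeneous_const_mult by (simp add: mult.assoc)
qed

lemma eval_homogeneous_scale:
  assumes "homogeneous D V q"
  shows "eval q (\<lambda>i. t * x i) = t ^ D * eval q x"
  unfolding eval_def sum_distrib_left
proof (rule sum.cong[OF refl])
  fix \<alpha> assume "\<alpha> \<in> Poly_Mapping.keys q"
  then have "mon_deg \<alpha> = D" using assms by (auto simp: homogeneous_def)
  then show "Poly_Mapping.lookup q \<alpha> * (\<Prod>i\<in>Poly_Mapping.keys \<alpha>. (t * x i) ^ Poly_Mapping.lookup \<alpha> i) =
    t ^ D * (Poly_Mapping.lookup q \<alpha> * (\<Prod>i\<in>Poly_Mapping.keys \<alpha>. x i ^ Poly_Mapping.lookup \<alpha> i))"
    by (simp add: power_mult_distrib prod.distrib power_sum[symmetric] mon_deg_def)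
qed

lemma eval_cong_vars:
  assumes "\<forall>\<alpha>\<in>Poly_Mapping.keys q. Poly_Mapping.keys \<alpha> \<subseteq> V" "\<And>i. i \<in> V \<Longrightarrow> x i = y i"
  shows "eval q x = eval q y"
  unfolding eval_def
proof (intro sum.cong[OF refl] arg_cong[where f = "\<lambda>u. _ * u"] prod.cong[OF refl])
  fix \<alpha> i assume "\<alpha> \<in> Poly_Mapping.keys q" "i \<in> Poly_Mapping.keys \<alpha>"
  then have "i \<in> V"
    using assms(1) by blast
  then show "x i ^ Poly_Mapping.lookup \<alpha> i = y i ^ Poly_Mapping.lookup \<alpha> i"
    using assms(2) by simp
qed

lemma eval_homogeneous_cong:
  assumes "homogeneous D V q" "\<And>i. i \<in> V \<Longrightarrow> x i = y i"
  shows "eval q x = eval q y"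
  using assms(1) by (intro eval_cong_vars[OF _ assms(2)]) (auto simp: homogeneous_def)

definition falling_fact :: "nat \<Rightarrow> nat \<Rightarrow> real" where
  "falling_fact a b = (\<Prod>j<b. real (a - j))"

lemma falling_fact_0 [simp]: "falling_fact a 0 = 1"
  by (simp add: falling_fact_def)

lemma falling_fact_Suc: "falling_fact a (Suc b) = falling_fact a b * real (a - b)"
  by (simp add: falling_fact_def)

lemma falling_fact_Suc_Suc: "falling_fact (Suc a) (Suc b) = real (Suc a) * falling_fact a b"
  unfolding falling_fact_def by (subst prod.lessThan_Suc_shift) simp

lemma falling_fact_eq_0: "a < b \<Longrightarrow> falling_fact a b = 0"
  unfolding falling_fact_def by (rule prod_zero) (auto intro!: bexI[of _ a])

lemma falling_fact_self: "falling_fact a a = fact a"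
  by (induction a) (simp_all add: falling_fact_Suc_Suc)

lemma falling_fact_nonneg: "0 \<le> falling_fact a b"
  unfolding falling_fact_def by (rule prod_nonneg) auto

lemma falling_fact_diff_one:
  assumes "1 \<le> a"
  shows "real a * falling_fact (a - 1) b = falling_fact a b * (real a - real b)"
proof -
  obtain a' where a: "a = Suc a'"
    using assms by (cases a) auto
  have "real a * falling_fact (a - 1) b = falling_fact a b * real (a - b)"
    by (simp add: a falling_fact_Suc_Suc flip: falling_fact_Suc)
  also have "\<dots> = falling_fact a b * (real a - real b)"
    by (cases "b \<le> a") (simp_all add: of_nat_diff falling_fact_eq_0)
  finally show ?thesis .
qed

lemma falling_fact_le_power: "falling_fact a b \<le> real a ^ b"
proof (induction b)
  case (Suc b)
  have "falling_fact a (Suc b) = falling_fact a b * real (a - b)"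
    by (rule falling_fact_Suc)
  also have "\<dots> \<le> real a ^ b * real a"
    by (rule mult_mono) (use Suc falling_fact_nonneg in auto)
  finally show ?case
    by (simp add: mult.commute)
qed simp

lemma power_minus_falling_fact_bound:
  assumes "real a \<le> T"
  shows "T * (real a ^ b - falling_fact a b) \<le> real b ^ 2 * T ^ b"
proof (induction b)
  case (Suc b)
  have T: "0 \<le> T" "real a ^ b \<le> T ^ b"
    using assms by (auto intro: order_trans[OF of_nat_0_le_iff] power_mono)
  show ?case
  proof (cases "b \<le> a")
    case True
    let ?f = "falling_fact a b"
    have "T * (real a ^ Suc b - falling_fact a (Suc b)) = real a * (T * (real a ^ b - ?f)) + real b * T * ?f"
      by (simp add: falling_fact_Suc True of_nat_diff algebra_simps)
    also have "\<dots> \<le> T * (real b ^ 2 * T ^ b) + real b * T * T ^ b"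
    proof (rule add_mono)
      show "real a * (T * (real a ^ b - ?f)) \<le> T * (real b ^ 2 * T ^ b)"
        by (rule mult_mono) (use assms Suc T falling_fact_le_power[of a b] in auto)
      show "real b * T * ?f \<le> real b * T * T ^ b"
        using falling_fact_le_power[of a b] T by (intro mult_left_mono) auto
    qed
    also have "\<dots> = (real b ^ 2 + real b) * T ^ Suc b"
      by (simp add: algebra_simps)
    also have "\<dots> \<le> real (Suc b) ^ 2 * T ^ Suc b"
      using T by (intro mult_right_mono) (auto simp: power2_eq_square algebra_simps)
    finally show ?thesis .
  next
    case False
    then have "falling_fact a (Suc b) = 0"
      by (intro falling_fact_eq_0) auto
    moreover have "real a * real a ^ b \<le> real b * T ^ b"
      using False T by (intro mult_mono) auto
    then have "T * real a ^ Suc b \<le> T * (real b * T ^ b)"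
      using T by (intro mult_left_mono) auto
    moreover have "T * (real b * T ^ b) \<le> real (Suc b) ^ 2 * T ^ Suc b"
      using T by (simp add: power2_eq_square algebra_simps mult_right_mono)
    ultimately show ?thesis
      by simp
  qed
qed simp

definition pow_prod :: "nat set \<Rightarrow> (nat \<Rightarrow> nat) \<Rightarrow> (nat \<Rightarrow> nat) \<Rightarrow> real" where
  "pow_prod V a b = (\<Prod>i\<in>V. real (a i) ^ b i)"

definition falling_prod :: "nat set \<Rightarrow> (nat \<Rightarrow> nat) \<Rightarrow> (nat \<Rightarrow> nat) \<Rightarrow> real" where
  "falling_prod V a b = (\<Prod>i\<in>V. falling_fact (a i) (b i))"

lemma falling_prod_le_pow_prod: "falling_prod V a b \<le> pow_prod V a b"
  unfolding falling_prod_def pow_prod_def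
  by (rule prod_mono) (simp add: falling_fact_nonneg falling_fact_le_power)

lemma pow_prod_le:
  assumes "\<And>i. i \<in> V \<Longrightarrow> real (a i) \<le> T"
  shows "pow_prod V a b \<le> T ^ (\<Sum>i\<in>V. b i)"
  unfolding pow_prod_def power_sum by (rule prod_mono) (use assms in \<open>auto intro: power_mono\<close>)

lemma pow_prod_minus_falling_prod_bound:
  assumes "finite V" "\<And>i. i \<in> V \<Longrightarrow> real (a i) \<le> T"
  shows "T * (pow_prod V a b - falling_prod V a b) \<le> (\<Sum>i\<in>V. real (b i) ^ 2) * T ^ (\<Sum>i\<in>V. b i)"
  using assms
proof (induction V rule: finite_induct)
  case (insert k A)
  let ?p = "real (a k) ^ b k" and ?f = "falling_fact (a k) (b k)"
  let ?P = "pow_prod A a b" and ?F = "falling_prod A a b"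
  have T: "0 \<le> T"
    using insert(4)[of k] by (meson insertI1 of_nat_0_le_iff order_trans)
  have P: "0 \<le> ?P" "?P \<le> T ^ (\<Sum>i\<in>A. b i)"
    unfolding pow_prod_def by (auto intro: prod_nonneg pow_prod_le[unfolded pow_prod_def] insert)
  have f: "?f \<le> T ^ b k"
    using falling_fact_le_power[of "a k" "b k"] power_mono[of "real (a k)" T "b k"] insert(4)[of k] by auto
  have IH: "T * (?P - ?F) \<le> (\<Sum>i\<in>A. real (b i) ^ 2) * T ^ (\<Sum>i\<in>A. b i)"
    using insert by auto
  have k: "T * (?p - ?f) \<le> real (b k) ^ 2 * T ^ b k"
    by (rule power_minus_falling_fact_bound) (use insert in auto)
  have "T * (pow_prod (insert k A) a b - falling_prod (insert k A) a b) = T * (?p - ?f) * ?P + ?f * (T * (?P - ?F))"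
    using insert by (simp add: pow_prod_def falling_prod_def algebra_simps)
  also have "\<dots> \<le> real (b k) ^ 2 * T ^ b k * T ^ (\<Sum>i\<in>A. b i)
      + T ^ b k * ((\<Sum>i\<in>A. real (b i) ^ 2) * T ^ (\<Sum>i\<in>A. b i))"
  proof (rule add_mono)
    show "T * (?p - ?f) * ?P \<le> real (b k) ^ 2 * T ^ b k * T ^ (\<Sum>i\<in>A. b i)"
      by (rule mult_mono[OF k P(2)]) (use T P(1) in auto)
    show "?f * (T * (?P - ?F)) \<le> T ^ b k * ((\<Sum>i\<in>A. real (b i) ^ 2) * T ^ (\<Sum>i\<in>A. b i))"
      using T falling_prod_le_pow_prod[of A a b] falling_fact_nonneg[of "a k" "b k"]
      by (intro mult_mono[OF f IH]) auto
  qed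
  also have "\<dots> = (\<Sum>i\<in>insert k A. real (b i) ^ 2) * T ^ (\<Sum>i\<in>insert k A. b i)"
    using insert by (simp add: algebra_simps power_add)
  finally show ?case .
qed (simp add: pow_prod_def falling_prod_def)

section \<open>Polya's theorem with an explicit exponent\<close>

lemma lookup_minus_single:
  "Poly_Mapping.lookup (\<alpha> - Poly_Mapping.single j (1::nat)) i =
     Poly_Mapping.lookup \<alpha> i - (if i = j then 1 else 0)"
  by (simp add: lookup_minus lookup_single when_def)

lemmas lookup_minus_single_simps = lookup_minus_single lookup_minus_single[simplified]

lemma add_single_eq_iff:
  assumes "1 \<le> Poly_Mapping.lookup \<alpha> j"
  shows "\<beta> + Poly_Mapping.single j (1::nat) = \<alpha> \<longleftrightarrow> \<beta> = \<alpha> - Poly_Mapping.single j 1"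
proof
  assume "\<beta> + Poly_Mapping.single j 1 = \<alpha>"
  then show "\<beta> = \<alpha> - Poly_Mapping.single j 1"
    by (intro poly_mapping_eqI) (auto simp: lookup_minus_single_simps lookup_add lookup_single when_def)
next
  assume "\<beta> = \<alpha> - Poly_Mapping.single j 1"
  then show "\<beta> + Poly_Mapping.single j 1 = \<alpha>"
    using assms by (intro poly_mapping_eqI) (auto simp: lookup_minus_single_simps lookup_add lookup_single when_def)
qed

lemma keys_minus_single: "Poly_Mapping.keys (\<alpha> - Poly_Mapping.single j (1::nat)) \<subseteq> Poly_Mapping.keys \<alpha>"
  by (auto simp: in_keys_iff lookup_minus_single_simps split: if_splits)

lemma mon_deg_minus_single:
  assumes "1 \<le> Poly_Mapping.lookup \<alpha> j"
  shows "mon_deg (\<alpha> - Poly_Mapping.single j 1) + 1 = mon_deg \<alpha>"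
proof -
  have "(\<alpha> - Poly_Mapping.single j 1) + Poly_Mapping.single j 1 = \<alpha>"
    using add_single_eq_iff[OF assms] by simp
  then show ?thesis
    using mon_deg_add[of "\<alpha> - Poly_Mapping.single j 1" "Poly_Mapping.single j 1"] by simp
qed

lemma real_mon_deg:
  "finite V \<Longrightarrow> Poly_Mapping.keys \<alpha> \<subseteq> V \<Longrightarrow> real (mon_deg \<alpha>) = (\<Sum>i\<in>V. real (Poly_Mapping.lookup \<alpha> i))"
  by (simp add: mon_deg_superset)

lemma lookup_mult_var:
  "Poly_Mapping.lookup (Q * var j) \<alpha> =
     (if 1 \<le> Poly_Mapping.lookup \<alpha> j then Poly_Mapping.lookup Q (\<alpha> - Poly_Mapping.single j 1) else 0)"
proof -
  have "Q * var j = (\<Sum>\<beta>\<in>Poly_Mapping.keys Q.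
      Poly_Mapping.single (\<beta> + Poly_Mapping.single j 1) (Poly_Mapping.lookup Q \<beta>))"
    by (subst mult_expansion) (simp add: var_def)
  then have expand: "Poly_Mapping.lookup (Q * var j) \<alpha> = (\<Sum>\<beta>\<in>Poly_Mapping.keys Q.
      if \<beta> + Poly_Mapping.single j 1 = \<alpha> then Poly_Mapping.lookup Q \<beta> else 0)"
    by (simp add: lookup_sum lookup_single when_def)
  show ?thesis
  proof (cases "1 \<le> Poly_Mapping.lookup \<alpha> j")
    case True
    then show ?thesis
      unfolding expand add_single_eq_iff[OF True] by (simp add: in_keys_iff)
  next
    case False
    then have "\<beta> + Poly_Mapping.single j 1 \<noteq> \<alpha>" for \<beta>
      by (auto dest: arg_cong[where f = "\<lambda>\<gamma>. Poly_Mapping.lookup \<gamma> j"] simp: lookup_add)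
    then show ?thesis
      unfolding expand using False by simp
  qed
qed

definition var_sum :: "nat set \<Rightarrow> mpoly" where
  "var_sum V = (\<Sum>j\<in>V. var j)"

lemma lookup_mult_var_sum:
  "Poly_Mapping.lookup (Q * var_sum V) \<alpha> = (\<Sum>j\<in>V.
     if 1 \<le> Poly_Mapping.lookup \<alpha> j then Poly_Mapping.lookup Q (\<alpha> - Poly_Mapping.single j 1) else 0)"
  by (simp add: var_sum_def sum_distrib_left lookup_sum lookup_mult_var)

lemma homogeneous_var_sum: "homogeneous 1 V (var_sum V)"
  unfolding var_sum_def by (rule homogeneous_sum) (rule homogeneous_var)

definition monom_fact :: "nat set \<Rightarrow> (nat \<Rightarrow>\<^sub>0 nat) \<Rightarrow> real" where
  "monom_fact V \<alpha> = (\<Prod>i\<in>V. fact (Poly_Mapping.lookup \<alpha> i))"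

lemma monom_fact_pos: "0 < monom_fact V \<alpha>"
  unfolding monom_fact_def by (rule prod_pos) auto

lemma monom_fact_minus_single:
  assumes "finite V" "j \<in> V" "1 \<le> Poly_Mapping.lookup \<alpha> j"
  shows "monom_fact V \<alpha> = real (Poly_Mapping.lookup \<alpha> j) * monom_fact V (\<alpha> - Poly_Mapping.single j 1)"
proof -
  obtain a where a: "Poly_Mapping.lookup \<alpha> j = Suc a"
    using assms(3) by (cases "Poly_Mapping.lookup \<alpha> j") auto
  have "(\<Prod>i\<in>V - {j}. fact (Poly_Mapping.lookup (\<alpha> - Poly_Mapping.single j 1) i) :: real) =
        (\<Prod>i\<in>V - {j}. fact (Poly_Mapping.lookup \<alpha> i))"
    by (rule prod.cong) (auto simp: lookup_minus_single_simps)
  then show ?thesis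
    unfolding monom_fact_def using assms
    by (simp add: prod.remove[OF assms(1,2)] lookup_minus_single_simps a)
qed

lemma falling_prod_minus_single:
  assumes "finite V" "j \<in> V"
  shows "(if 1 \<le> Poly_Mapping.lookup \<alpha> j
          then real (Poly_Mapping.lookup \<alpha> j) * falling_prod V (Poly_Mapping.lookup (\<alpha> - Poly_Mapping.single j 1)) b
          else 0)
       = falling_prod V (Poly_Mapping.lookup \<alpha>) b * (real (Poly_Mapping.lookup \<alpha> j) - real (b j))"
proof (cases "1 \<le> Poly_Mapping.lookup \<alpha> j")
  case True
  have "(\<Prod>i\<in>V - {j}. falling_fact (Poly_Mapping.lookup (\<alpha> - Poly_Mapping.single j 1) i) (b i)) =
        (\<Prod>i\<in>V - {j}. falling_fact (Poly_Mapping.lookup \<alpha> i) (b i))"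
    by (rule prod.cong) (auto simp: lookup_minus_single_simps)
  then show ?thesis
    using falling_fact_diff_one[OF True, of "b j"] True
    unfolding falling_prod_def by (simp add: prod.remove[OF assms] lookup_minus_single_simps)
next
  case False
  then have "Poly_Mapping.lookup \<alpha> j = 0"
    by simp
  moreover have "falling_prod V (Poly_Mapping.lookup \<alpha>) b = 0" if "b j \<noteq> 0"
    unfolding falling_prod_def using assms that \<open>Poly_Mapping.lookup \<alpha> j = 0\<close>
    by (intro prod_zero) (auto intro!: bexI[of _ j] falling_fact_eq_0)
  ultimately show ?thesis
    using False by fastforce
qed

lemma falling_prod_same_degree:
  assumes "finite V" "Poly_Mapping.keys \<alpha> \<subseteq> V" "Poly_Mapping.keys \<beta> \<subseteq> V" "mon_deg \<alpha> = mon_deg \<beta>"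
  shows "falling_prod V (Poly_Mapping.lookup \<alpha>) (Poly_Mapping.lookup \<beta>) = (if \<beta> = \<alpha> then monom_fact V \<alpha> else 0)"
proof (cases "\<exists>i\<in>V. Poly_Mapping.lookup \<alpha> i < Poly_Mapping.lookup \<beta> i")
  case True
  then obtain i where "i \<in> V" "Poly_Mapping.lookup \<alpha> i < Poly_Mapping.lookup \<beta> i"
    by blast
  then show ?thesis
    unfolding falling_prod_def using assms(1)
    by (auto intro!: prod_zero bexI[of _ i] falling_fact_eq_0)
next
  case False
  have "\<forall>i\<in>V. Poly_Mapping.lookup \<beta> i = Poly_Mapping.lookup \<alpha> i"
  proof (rule ccontr)
    assume "\<not> ?thesis"
    then obtain i where "i \<in> V" "Poly_Mapping.lookup \<beta> i < Poly_Mapping.lookup \<alpha> i"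
      using False by force
    then have "(\<Sum>i\<in>V. Poly_Mapping.lookup \<beta> i) < (\<Sum>i\<in>V. Poly_Mapping.lookup \<alpha> i)"
      by (intro sum_strict_mono_ex1) (use assms(1) False in \<open>auto simp: not_less\<close>)
    then show False
      using assms by (simp add: mon_deg_superset)
  qed
  then have "\<beta> = \<alpha>"
    using assms(2,3) by (intro poly_mapping_eqI) (metis in_keys_iff subsetD)
  then show ?thesis
    by (simp add: falling_prod_def monom_fact_def falling_fact_self)
qed

text \<open>The Polya sum: the coefficient of \<open>x\<^sup>\<alpha>\<close> in \<open>G (\<Sigma>\<^sub>i x\<^sub>i)\<^sup>M\<close>, up to the factor \<open>M!/\<alpha>!\<close>, is \<open>G\<close>
  evaluated at \<open>\<alpha>\<close> with the powers \<open>\<alpha>\<^sup>\<beta>\<close> replaced by falling factorials.\<close>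

definition polya_sum :: "nat set \<Rightarrow> mpoly \<Rightarrow> (nat \<Rightarrow>\<^sub>0 nat) \<Rightarrow> real" where
  "polya_sum V G \<alpha> = (\<Sum>\<beta>\<in>Poly_Mapping.keys G.
     Poly_Mapping.lookup G \<beta> * falling_prod V (Poly_Mapping.lookup \<alpha>) (Poly_Mapping.lookup \<beta>))"

lemma polya_sum_minus_single:
  assumes "finite V" "j \<in> V"
  shows "(if 1 \<le> Poly_Mapping.lookup \<alpha> j
          then real (Poly_Mapping.lookup \<alpha> j) * polya_sum V G (\<alpha> - Poly_Mapping.single j 1) else 0)
       = (\<Sum>\<beta>\<in>Poly_Mapping.keys G. Poly_Mapping.lookup G \<beta> *
           falling_prod V (Poly_Mapping.lookup \<alpha>) (Poly_Mapping.lookup \<beta>) *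
           (real (Poly_Mapping.lookup \<alpha> j) - real (Poly_Mapping.lookup \<beta> j)))"
proof -
  have "(\<Sum>\<beta>\<in>Poly_Mapping.keys G. Poly_Mapping.lookup G \<beta> *
           falling_prod V (Poly_Mapping.lookup \<alpha>) (Poly_Mapping.lookup \<beta>) *
           (real (Poly_Mapping.lookup \<alpha> j) - real (Poly_Mapping.lookup \<beta> j)))
      = (\<Sum>\<beta>\<in>Poly_Mapping.keys G. Poly_Mapping.lookup G \<beta> *
           (if 1 \<le> Poly_Mapping.lookup \<alpha> j then real (Poly_Mapping.lookup \<alpha> j) *
              falling_prod V (Poly_Mapping.lookup (\<alpha> - Poly_Mapping.single j 1)) (Poly_Mapping.lookup \<beta>)
            else 0))"
    by (simp only: falling_prod_minus_single[OF assms] mult.assoc)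
  then show ?thesis
    by (cases "1 \<le> Poly_Mapping.lookup \<alpha> j") (simp_all add: polya_sum_def sum_distrib_left mult_ac)
qed

lemma coeff_mult_var_sum_power:
  assumes V: "finite V" and G: "homogeneous D V G"
  shows "Poly_Mapping.keys \<alpha> \<subseteq> V \<Longrightarrow> mon_deg \<alpha> = M + D \<Longrightarrow>
    Poly_Mapping.lookup (G * var_sum V ^ M) \<alpha> * monom_fact V \<alpha> = fact M * polya_sum V G \<alpha>"
proof (induction M arbitrary: \<alpha>)
  case 0
  have "polya_sum V G \<alpha> = (\<Sum>\<beta>\<in>Poly_Mapping.keys G. if \<beta> = \<alpha> then Poly_Mapping.lookup G \<beta> * monom_fact V \<alpha> else 0)"
    unfolding polya_sum_def
    by (rule sum.cong[OF refl]) (use G 0 in \<open>auto simp: homogeneous_def falling_prod_same_degree[OF V]\<close>)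
  then show ?case
    by (simp add: in_keys_iff)
next
  case (Suc M)
  let ?a = "Poly_Mapping.lookup \<alpha>" and ?e = "\<lambda>j. Poly_Mapping.single j (1::nat)"
  have step: "(if 1 \<le> ?a j then Poly_Mapping.lookup (G * var_sum V ^ M) (\<alpha> - ?e j) else 0) * monom_fact V \<alpha> =
      fact M * (if 1 \<le> ?a j then real (?a j) * polya_sum V G (\<alpha> - ?e j) else 0)" if "j \<in> V" for j
  proof (cases "1 \<le> ?a j")
    case True
    have "Poly_Mapping.keys (\<alpha> - ?e j) \<subseteq> V" "mon_deg (\<alpha> - ?e j) = M + D"
      using keys_minus_single[of \<alpha> j] mon_deg_minus_single[OF True] Suc.prems by auto
    then show ?thesis
      using Suc.IH True by (simp add: monom_fact_minus_single[OF V that True])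
  qed simp
  have deg: "(\<Sum>j\<in>V. real (?a j) - real (Poly_Mapping.lookup \<beta> j)) = real (Suc M)"
    if "\<beta> \<in> Poly_Mapping.keys G" for \<beta>
    using G that Suc.prems real_mon_deg[OF V, of \<alpha>] real_mon_deg[OF V, of \<beta>]
    by (auto simp: homogeneous_def sum_subtractf)
  have "Poly_Mapping.lookup (G * var_sum V ^ Suc M) \<alpha> * monom_fact V \<alpha> =
      (\<Sum>j\<in>V. (if 1 \<le> ?a j then Poly_Mapping.lookup (G * var_sum V ^ M) (\<alpha> - ?e j) else 0) * monom_fact V \<alpha>)"
    by (simp add: power_Suc2 mult.assoc[symmetric] lookup_mult_var_sum sum_distrib_right del: power_Suc)
  also have "\<dots> = fact M * (\<Sum>j\<in>V. if 1 \<le> ?a j then real (?a j) * polya_sum V G (\<alpha> - ?e j) else 0)"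
    unfolding sum_distrib_left by (rule sum.cong[OF refl]) (rule step)
  also have "\<dots> = fact M * (\<Sum>j\<in>V. \<Sum>\<beta>\<in>Poly_Mapping.keys G. Poly_Mapping.lookup G \<beta> *
        falling_prod V ?a (Poly_Mapping.lookup \<beta>) * (real (?a j) - real (Poly_Mapping.lookup \<beta> j)))"
    by (intro arg_cong[where f = "(*) (fact M)"] sum.cong refl polya_sum_minus_single[OF V])
  also have "\<dots> = fact M * (\<Sum>\<beta>\<in>Poly_Mapping.keys G. Poly_Mapping.lookup G \<beta> *
        falling_prod V ?a (Poly_Mapping.lookup \<beta>) * (\<Sum>j\<in>V. real (?a j) - real (Poly_Mapping.lookup \<beta> j)))"
    by (subst sum.swap) (simp add: sum_distrib_left)
  also have "\<dots> = fact (Suc M) * polya_sum V G \<alpha>"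
    by (simp add: deg polya_sum_def sum_distrib_left sum_distrib_right algebra_simps)
  finally show ?case .
qed

lemma eval_eq_pow_prod:
  assumes "homogeneous D V G" "finite V"
  shows "eval G (\<lambda>i. real (a i)) =
    (\<Sum>\<beta>\<in>Poly_Mapping.keys G. Poly_Mapping.lookup G \<beta> * pow_prod V a (Poly_Mapping.lookup \<beta>))"
  unfolding eval_def pow_prod_def
proof (intro sum.cong[OF refl] arg_cong[where f = "\<lambda>u. _ * u"])
  fix \<beta> assume "\<beta> \<in> Poly_Mapping.keys G"
  then have "Poly_Mapping.keys \<beta> \<subseteq> V"
    using assms by (auto simp: homogeneous_def)
  then show "(\<Prod>i\<in>Poly_Mapping.keys \<beta>. real (a i) ^ Poly_Mapping.lookup \<beta> i) =
      (\<Prod>i\<in>V. real (a i) ^ Poly_Mapping.lookup \<beta> i)"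
    by (intro prod.mono_neutral_left) (use assms(2) in \<open>auto simp: in_keys_iff\<close>)
qed

lemma sum_squares_le_square_sum:
  assumes "finite V"
  shows "(\<Sum>i\<in>V. real (b i) ^ 2) \<le> real (sum b V) ^ 2"
proof -
  have "(\<Sum>i\<in>V. real (b i) ^ 2) \<le> (\<Sum>i\<in>V. real (sum b V) * real (b i))"
    unfolding power2_eq_square
    by (intro sum_mono mult_right_mono) (use assms in \<open>auto intro: member_le_sum\<close>)
  also have "\<dots> = real (sum b V) ^ 2"
    by (simp add: sum_distrib_left[symmetric] power2_eq_square)
  finally show ?thesis .
qed

lemma pow_prod_minus_falling_prod_le:
  assumes "finite V" "Poly_Mapping.keys \<beta> \<subseteq> V" "mon_deg \<beta> = D" "0 \<le> T"
    and "\<And>i. i \<in> V \<Longrightarrow> real (a i) \<le> T"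
  shows "T * (pow_prod V a (Poly_Mapping.lookup \<beta>) - falling_prod V a (Poly_Mapping.lookup \<beta>)) \<le> real D ^ 2 * T ^ D"
proof -
  have deg: "(\<Sum>i\<in>V. Poly_Mapping.lookup \<beta> i) = D"
    using mon_deg_superset[OF assms(1,2)] assms(3) by simp
  have "T * (pow_prod V a (Poly_Mapping.lookup \<beta>) - falling_prod V a (Poly_Mapping.lookup \<beta>))
      \<le> (\<Sum>i\<in>V. real (Poly_Mapping.lookup \<beta> i) ^ 2) * T ^ D"
    using pow_prod_minus_falling_prod_bound[of V a T "Poly_Mapping.lookup \<beta>"] assms(1,5) deg by simp
  also have "\<dots> \<le> real D ^ 2 * T ^ D"
    using sum_squares_le_square_sum[OF assms(1), of "Poly_Mapping.lookup \<beta>"] deg assms(4)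
    by (intro mult_right_mono) auto
  finally show ?thesis .
qed

lemma eval_minus_polya_sum_le:
  assumes V: "finite V" and G: "homogeneous D V G"
    and K: "finite K" "Poly_Mapping.keys G \<subseteq> K" "(\<Sum>\<beta>\<in>K. \<bar>Poly_Mapping.lookup G \<beta>\<bar>) \<le> L"
    and \<alpha>: "Poly_Mapping.keys \<alpha> \<subseteq> V" "mon_deg \<alpha> = N"
  shows "real N * (eval G (\<lambda>i. real (Poly_Mapping.lookup \<alpha> i)) - polya_sum V G \<alpha>) \<le> L * real D ^ 2 * real N ^ D"
proof -
  let ?a = "Poly_Mapping.lookup \<alpha>" and ?T = "real N"
  let ?err = "\<lambda>\<beta>. ?T * (pow_prod V ?a (Poly_Mapping.lookup \<beta>) - falling_prod V ?a (Poly_Mapping.lookup \<beta>))"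
  have aT: "real (?a i) \<le> ?T" if "i \<in> V" for i
  proof -
    have "?a i \<le> (\<Sum>i\<in>V. ?a i)"
      using V that by (intro member_le_sum) auto
    also have "\<dots> = N"
      using mon_deg_superset[OF V \<alpha>(1)] \<alpha>(2) by simp
    finally show ?thesis
      by simp
  qed
  have err: "0 \<le> ?err \<beta>" "?err \<beta> \<le> real D ^ 2 * ?T ^ D" if "\<beta> \<in> Poly_Mapping.keys G" for \<beta>
    using G that falling_prod_le_pow_prod[of V ?a "Poly_Mapping.lookup \<beta>"] aT
    by (auto simp: homogeneous_def intro!: pow_prod_minus_falling_prod_le[OF V])
  have "?T * (eval G (\<lambda>i. real (?a i)) - polya_sum V G \<alpha>) =
      (\<Sum>\<beta>\<in>Poly_Mapping.keys G. Poly_Mapping.lookup G \<beta> * ?err \<beta>)"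
    by (simp add: eval_eq_pow_prod[OF G V] polya_sum_def sum_distrib_left sum_subtractf[symmetric]
        algebra_simps)
  also have "\<dots> \<le> (\<Sum>\<beta>\<in>Poly_Mapping.keys G. \<bar>Poly_Mapping.lookup G \<beta>\<bar> * (real D ^ 2 * ?T ^ D))"
  proof (rule sum_mono)
    fix \<beta> assume "\<beta> \<in> Poly_Mapping.keys G"
    then have "Poly_Mapping.lookup G \<beta> * ?err \<beta> \<le> \<bar>Poly_Mapping.lookup G \<beta>\<bar> * ?err \<beta>"
      using err(1) by (intro mult_right_mono) auto
    also have "\<dots> \<le> \<bar>Poly_Mapping.lookup G \<beta>\<bar> * (real D ^ 2 * ?T ^ D)"
      using err(2) \<open>\<beta> \<in> Poly_Mapping.keys G\<close> by (intro mult_left_mono) auto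
    finally show "Poly_Mapping.lookup G \<beta> * ?err \<beta> \<le> \<bar>Poly_Mapping.lookup G \<beta>\<bar> * (real D ^ 2 * ?T ^ D)" .
  qed
  also have "\<dots> \<le> (\<Sum>\<beta>\<in>K. \<bar>Poly_Mapping.lookup G \<beta>\<bar>) * (real D ^ 2 * ?T ^ D)"
    unfolding sum_distrib_right[symmetric]
    by (intro mult_right_mono sum_mono2 K) auto
  also have "\<dots> \<le> L * (real D ^ 2 * ?T ^ D)"
    by (intro mult_right_mono K) auto
  finally show ?thesis
    by (simp add: mult.assoc)
qed

lemma eval_ge_at_exponent:
  assumes V: "finite V" and G: "homogeneous D V G"
    and pos: "\<And>x. (\<forall>i. 0 \<le> x i) \<Longrightarrow> (\<Sum>i\<in>V. x i) = 1 \<Longrightarrow> \<mu> \<le> eval G x"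
    and \<alpha>: "Poly_Mapping.keys \<alpha> \<subseteq> V" "mon_deg \<alpha> = N" "0 < N"
  shows "real N ^ D * \<mu> \<le> eval G (\<lambda>i. real (Poly_Mapping.lookup \<alpha> i))"
proof -
  let ?T = "real N" and ?a = "\<lambda>i. real (Poly_Mapping.lookup \<alpha> i)"
  have "(\<Sum>i\<in>V. ?a i / ?T) = 1"
    using \<alpha> real_mon_deg[OF V \<alpha>(1)] by (simp add: sum_divide_distrib[symmetric])
  then have "\<mu> \<le> eval G (\<lambda>i. ?a i / ?T)"
    by (intro pos) auto
  moreover have "eval G ?a = ?T ^ D * eval G (\<lambda>i. ?a i / ?T)"
    using eval_homogeneous_scale[OF G, of ?T "\<lambda>i. ?a i / ?T"] \<alpha>(3) by simp
  ultimately show ?thesis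
    using \<alpha>(3) by simp
qed

lemma polya_sum_nonneg:
  assumes V: "finite V" and G: "homogeneous D V G" and D: "1 \<le> D"
    and K: "finite K" "Poly_Mapping.keys G \<subseteq> K" "(\<Sum>\<beta>\<in>K. \<bar>Poly_Mapping.lookup G \<beta>\<bar>) \<le> L"
    and pos: "\<And>x. (\<forall>i. 0 \<le> x i) \<Longrightarrow> (\<Sum>i\<in>V. x i) = 1 \<Longrightarrow> \<mu> \<le> eval G x"
    and big: "L * real D ^ 2 \<le> real (M + D) * \<mu>"
    and \<alpha>: "Poly_Mapping.keys \<alpha> \<subseteq> V" "mon_deg \<alpha> = M + D"
  shows "0 \<le> polya_sum V G \<alpha>"
proof -
  let ?T = "real (M + D)" and ?a = "\<lambda>i. real (Poly_Mapping.lookup \<alpha> i)"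
  have T: "0 < ?T"
    using D by simp
  have "?T * (?T ^ D * \<mu>) \<le> ?T * eval G ?a"
    using eval_ge_at_exponent[OF V G pos \<alpha>] D T by (intro mult_left_mono) auto
  moreover have "?T * (eval G ?a - polya_sum V G \<alpha>) \<le> L * real D ^ 2 * ?T ^ D"
    by (rule eval_minus_polya_sum_le[OF V G K \<alpha>])
  moreover have "0 \<le> ?T ^ D * (?T * \<mu> - L * real D ^ 2)"
    using big T by simp
  moreover have "?T ^ D * (?T * \<mu> - L * real D ^ 2) = ?T * (?T ^ D * \<mu>) - L * real D ^ 2 * ?T ^ D"
    by (simp add: algebra_simps)
  ultimately have "0 \<le> ?T * polya_sum V G \<alpha>"
    by (simp add: algebra_simps)
  then show ?thesis
    using T by (simp add: zero_le_mult_iff)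
qed

theorem polya_nonneg_coeffs:
  assumes V: "finite V" and G: "homogeneous D V G" and D: "1 \<le> D"
    and K: "finite K" "Poly_Mapping.keys G \<subseteq> K" "(\<Sum>\<beta>\<in>K. \<bar>Poly_Mapping.lookup G \<beta>\<bar>) \<le> L"
    and pos: "\<And>x. (\<forall>i. 0 \<le> x i) \<Longrightarrow> (\<Sum>i\<in>V. x i) = 1 \<Longrightarrow> \<mu> \<le> eval G x"
    and big: "L * real D ^ 2 \<le> real (M + D) * \<mu>"
  shows "nonneg_coeffs (G * var_sum V ^ M)"
  unfolding nonneg_coeffs_def
proof
  fix \<alpha>
  show "0 \<le> Poly_Mapping.lookup (G * var_sum V ^ M) \<alpha>"
  proof (cases "\<alpha> \<in> Poly_Mapping.keys (G * var_sum V ^ M)")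
    case True
    have "homogeneous (D + 1 * M) V (G * var_sum V ^ M)"
      by (rule homogeneous_mult[OF G homogeneous_power[OF homogeneous_var_sum]])
    then have \<alpha>: "Poly_Mapping.keys \<alpha> \<subseteq> V" "mon_deg \<alpha> = M + D"
      using True by (auto simp: homogeneous_def)
    then have "0 \<le> Poly_Mapping.lookup (G * var_sum V ^ M) \<alpha> * monom_fact V \<alpha>"
      using coeff_mult_var_sum_power[OF V G \<alpha>] polya_sum_nonneg[OF V G D K pos big \<alpha>] by simp
    then show ?thesis
      using monom_fact_pos[of V \<alpha>] by (simp add: zero_le_mult_iff)
  qed (simp add: in_keys_iff)
qed

section \<open>Positive forms are bounded below by a power of the norm\<close>

lemma continuous_on_eval: "continuous_on UNIV (eval q)"
  unfolding eval_def by (intro continuous_intros continuous_on_product_coordinates)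

lemma compact_unit_sphere_coords:
  "compact {u :: nat \<Rightarrow> real. (\<forall>i\<ge>N. u i = 0) \<and> (\<Sum>i<N. u i ^ 2) = 1}"
proof -
  let ?B = "PiE UNIV (\<lambda>i::nat. if i < N then {-1..1::real} else {0})"
  have "compactin (product_topology (\<lambda>i. euclidean) UNIV) ?B"
    by (subst compactin_PiE) (auto simp: compactin_euclidean_iff)
  then have "compact ?B"
    by (simp add: euclidean_product_topology compactin_euclidean_iff)
  then have "compact (?B \<inter> {u. (\<Sum>i<N. u i ^ 2) = 1})"
    by (intro compact_Int_closed closed_Collect_eq continuous_intros continuous_on_product_coordinates)
  moreover have "\<bar>u i\<bar> \<le> 1" if "(\<Sum>i<N. u i ^ 2) = 1" "i < N" for u :: "nat \<Rightarrow> real" and i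
  proof -
    have "u i ^ 2 \<le> 1 ^ 2"
      using member_le_sum[of i "{..<N}" "\<lambda>i. u i ^ 2"] that by simp
    then show ?thesis
      using abs_le_square_iff[of "u i" 1] by simp
  qed
  then have "{u. (\<forall>i\<ge>N. u i = 0) \<and> (\<Sum>i<N. u i ^ 2) = 1} = ?B \<inter> {u. (\<Sum>i<N. u i ^ 2) = 1}"
  proof (intro equalityI subsetI)
    fix u assume "u \<in> ?B \<inter> {u. (\<Sum>i<N. u i ^ 2) = 1}"
    then show "u \<in> {u. (\<forall>i\<ge>N. u i = 0) \<and> (\<Sum>i<N. u i ^ 2) = 1}"
      by (simp add: PiE_iff) (metis not_less singletonD)
  qed (auto simp: PiE_iff abs_le_iff)
  ultimately show ?thesis
    by simp
qed


lemma homogeneous_ge_norm_power: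
  assumes H: "homogeneous D {..<N} H" and D: "1 \<le> D"
    and sphere: "\<And>u. (\<forall>i\<ge>N. u i = 0) \<Longrightarrow> (\<Sum>i<N. u i ^ 2) = 1 \<Longrightarrow> c \<le> eval H u"
  shows "c * sqrt (\<Sum>i<N. z i ^ 2) ^ D \<le> eval H z"
proof -
  define w where "w = (\<lambda>i. if i < N then z i else 0)"
  define \<rho> where "\<rho> = sqrt (\<Sum>i<N. z i ^ 2)"
  have w: "eval H z = eval H w" "(\<Sum>i<N. w i ^ 2) = (\<Sum>i<N. z i ^ 2)"
    by (rule eval_homogeneous_cong[OF H]) (simp_all add: w_def)
  show ?thesis
  proof (cases "\<rho> = 0")
    case True
    then have "\<forall>i\<in>{..<N}. z i ^ 2 = 0"
      unfolding \<rho>_def by (subst sum_nonneg_eq_0_iff[symmetric]) auto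
    then have "w = (\<lambda>i. 0 * w i)"
      by (simp add: w_def fun_eq_iff)
    then have "eval H w = 0 ^ D * eval H w"
      using eval_homogeneous_scale[OF H, of 0 w] by simp
    then show ?thesis
      using True D w by (simp add: \<rho>_def power_0_left)
  next
    case False
    then have \<rho>: "0 < \<rho>"
      using sum_nonneg[of "{..<N}" "\<lambda>i. z i ^ 2"] by (simp add: \<rho>_def)
    define u where "u = (\<lambda>i. w i / \<rho>)"
    have "(\<Sum>i<N. w i ^ 2) = \<rho> ^ 2"
      using w(2) by (simp add: \<rho>_def sum_nonneg)
    then have "(\<Sum>i<N. u i ^ 2) = 1"
      using \<rho> by (simp add: u_def power_divide flip: sum_divide_distrib)
    then have "c * \<rho> ^ D \<le> \<rho> ^ D * eval H u"
      using sphere[of u] \<rho> by (simp add: u_def w_def mult.commute)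
    also have "\<rho> ^ D * eval H u = eval H w"
      using eval_homogeneous_scale[OF H, of \<rho> u] \<rho> by (simp add: u_def)
    finally show ?thesis
      using w by (simp add: \<rho>_def)
  qed
qed

lemma homogeneous_pos_lower_bound:
  assumes H: "homogeneous D {..<N} H" and D: "1 \<le> D" and N: "1 \<le> N"
    and pos: "\<And>z. (\<Sum>i<N. z i ^ 2) \<noteq> 0 \<Longrightarrow> 0 < eval H z"
  shows "\<exists>c>0. \<forall>z. c * sqrt (\<Sum>i<N. z i ^ 2) ^ D \<le> eval H z"
proof -
  define S where "S = {u :: nat \<Rightarrow> real. (\<forall>i\<ge>N. u i = 0) \<and> (\<Sum>i<N. u i ^ 2) = 1}"
  have "(\<Sum>i<N. (if i = 0 then 1 else 0 :: real) ^ 2) = (\<Sum>i<N. if i = 0 then 1 else 0)"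
    by (rule sum.cong) auto
  then have "(\<lambda>i. if i = 0 then 1 else 0) \<in> S"
    using N by (simp add: S_def)
  then obtain z0 where z0: "z0 \<in> S" "\<And>u. u \<in> S \<Longrightarrow> eval H z0 \<le> eval H u"
    using continuous_attains_inf[OF compact_unit_sphere_coords[of N, folded S_def] _
        continuous_on_subset[OF continuous_on_eval subset_UNIV]] by blast
  have "0 < eval H z0"
    using z0(1) by (intro pos) (simp add: S_def)
  moreover have "eval H z0 * sqrt (\<Sum>i<N. z i ^ 2) ^ D \<le> eval H z" for z
    using z0(2) by (intro homogeneous_ge_norm_power[OF H D]) (simp add: S_def)
  ultimately show ?thesis
    by blast
qed

section \<open>The perturbed form\<close>

text \<open>\<open>H(v\<^sup>2 - w\<^sup>2) - |v\<^sup>2 - w\<^sup>2|\<^sup>4\<^sup>d/r + (\<Sigma> v\<^sub>i\<^sup>4 + w\<^sub>i\<^sup>4)\<^sup>2\<^sup>d/(2r)\<close> before the squares are substituted: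
  variable \<open>2i\<close> stands for \<open>v\<^sub>i\<^sup>2\<close> and variable \<open>2i+1\<close> for \<open>w\<^sub>i\<^sup>2\<close>.\<close>

definition perturbed_form :: "nat \<Rightarrow> nat \<Rightarrow> mpoly \<Rightarrow> nat \<Rightarrow> mpoly" where
  "perturbed_form N d H r =
     subst H (\<lambda>i. var (2 * i) - var (2 * i + 1))
     - const (1 / real r) * (\<Sum>i<N. (var (2 * i) - var (2 * i + 1)) ^ 2) ^ (2 * d)
     + const (1 / (2 * real r)) * (\<Sum>i<N. var (2 * i) ^ 2 + var (2 * i + 1) ^ 2) ^ (2 * d)"

lemma eval_perturbed_form:
  "eval (perturbed_form N d H r) x =
     eval H (\<lambda>i. x (2 * i) - x (2 * i + 1))
     - 1 / real r * (\<Sum>i<N. (x (2 * i) - x (2 * i + 1)) ^ 2) ^ (2 * d)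
     + 1 / (2 * real r) * (\<Sum>i<N. x (2 * i) ^ 2 + x (2 * i + 1) ^ 2) ^ (2 * d)"
  by (simp add: perturbed_form_def eval_subst)

lemma homogeneous_perturbed_form:
  assumes "homogeneous (4 * d) {..<N} H"
  shows "homogeneous (4 * d) {..<2 * N} (perturbed_form N d H r)"
proof -
  let ?V = "{..<2 * N}"
  have v: "homogeneous 1 ?V (var (2 * i))" "homogeneous 1 ?V (var (2 * i + 1))" if "i < N" for i
    using that by (intro homogeneous_var; simp)+
  then have diff: "homogeneous 1 ?V (var (2 * i) - var (2 * i + 1))" if "i < N" for i
    using that by (simp add: homogeneous_diff)
  have "homogeneous 2 ?V (\<Sum>i<N. (var (2 * i) - var (2 * i + 1)) ^ 2)"
    using homogeneous_square[OF diff] by (intro homogeneous_sum) simp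
  moreover have "homogeneous 2 ?V (\<Sum>i<N. var (2 * i) ^ 2 + var (2 * i + 1) ^ 2)"
    using homogeneous_square[OF v(1)] homogeneous_square[OF v(2)]
    by (intro homogeneous_sum homogeneous_add) simp_all
  ultimately show ?thesis
    unfolding perturbed_form_def
    using homogeneous_power[of 2 ?V _ "2 * d"]
    by (intro homogeneous_add homogeneous_diff homogeneous_const_mult homogeneous_subst[OF assms diff])
       (simp_all add: mult.assoc)
qed

lemma sum_lessThan_double:
  "(\<Sum>j<2 * (N::nat). f j) = (\<Sum>i<N. f (2 * i)) + (\<Sum>i<N. (f (2 * i + 1) :: 'a::comm_monoid_add))"
  by (induction N) (simp_all add: algebra_simps)

lemma lookup_const_mult: "Poly_Mapping.lookup (const c * q) \<alpha> = c * Poly_Mapping.lookup q \<alpha>"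
proof -
  have "const c * q = Poly_Mapping.map ((*) c) q"
    by (simp add: const_def mult_map_scale_conv_mult)
  then show ?thesis
    by (simp add: map.rep_eq when_def)
qed

lemma perturbed_form_coeffs_bounded:
  obtains K L where "finite K"
    "\<And>r. Poly_Mapping.keys (perturbed_form N d H r) \<subseteq> K"
    "\<And>r. 1 \<le> r \<Longrightarrow> (\<Sum>\<beta>\<in>K. \<bar>Poly_Mapping.lookup (perturbed_form N d H r) \<beta>\<bar>) \<le> L"
proof -
  define A where "A = subst H (\<lambda>i. var (2 * i) - var (2 * i + 1))"
  define Z where "Z = (\<Sum>i<N. (var (2 * i) - var (2 * i + 1)) ^ 2) ^ (2 * d)"
  define Q where "Q = (\<Sum>i<N. var (2 * i) ^ 2 + var (2 * i + 1) ^ 2) ^ (2 * d)"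
  define K where "K = Poly_Mapping.keys A \<union> Poly_Mapping.keys Z \<union> Poly_Mapping.keys Q"
  define L where "L = (\<Sum>\<beta>\<in>K. \<bar>Poly_Mapping.lookup A \<beta>\<bar> + \<bar>Poly_Mapping.lookup Z \<beta>\<bar> + \<bar>Poly_Mapping.lookup Q \<beta>\<bar>)"
  have coeff: "Poly_Mapping.lookup (perturbed_form N d H r) \<beta> = Poly_Mapping.lookup A \<beta>
      - 1 / real r * Poly_Mapping.lookup Z \<beta> + 1 / (2 * real r) * Poly_Mapping.lookup Q \<beta>" for r \<beta>
    by (simp add: perturbed_form_def A_def Z_def Q_def lookup_add lookup_minus lookup_const_mult)
  have "finite K"
    by (simp add: K_def)
  moreover have "Poly_Mapping.keys (perturbed_form N d H r) \<subseteq> K" for r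
    by (auto simp: K_def in_keys_iff coeff)
  moreover have "(\<Sum>\<beta>\<in>K. \<bar>Poly_Mapping.lookup (perturbed_form N d H r) \<beta>\<bar>) \<le> L" if "1 \<le> r" for r
  proof -
    have "\<bar>Poly_Mapping.lookup (perturbed_form N d H r) \<beta>\<bar>
        \<le> \<bar>Poly_Mapping.lookup A \<beta>\<bar> + \<bar>Poly_Mapping.lookup Z \<beta>\<bar> + \<bar>Poly_Mapping.lookup Q \<beta>\<bar>" for \<beta>
    proof -
      let ?a = "Poly_Mapping.lookup A \<beta>" and ?z = "Poly_Mapping.lookup Z \<beta>"
        and ?q = "Poly_Mapping.lookup Q \<beta>"
      have scale: "\<bar>c * x\<bar> \<le> \<bar>x\<bar>" if "0 \<le> c" "c \<le> 1" for c x :: real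
        using that mult_left_le_one_le[of "\<bar>x\<bar>" c] by (simp add: abs_mult)
      have "\<bar>1 / real r * ?z\<bar> \<le> \<bar>?z\<bar>" "\<bar>1 / (2 * real r) * ?q\<bar> \<le> \<bar>?q\<bar>"
        using \<open>1 \<le> r\<close> by (intro scale; simp)+
      then show ?thesis
        unfolding coeff using abs_triangle_ineq[of "?a - 1 / real r * ?z" "1 / (2 * real r) * ?q"]
          abs_triangle_ineq4[of ?a "1 / real r * ?z"] by linarith
    qed
    then show ?thesis
      unfolding L_def by (rule sum_mono)
  qed
  ultimately show ?thesis
    by (rule that)
qed

lemma perturbed_form_ge_on_simplex:
  assumes H: "\<And>z. c * sqrt (\<Sum>i<N. z i ^ 2) ^ (4 * d) \<le> eval H z"
    and r: "1 / c \<le> real r" "0 < c" "0 < r" and N: "1 \<le> N"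
    and x: "\<forall>i. 0 \<le> x i" "(\<Sum>j<2 * N. x j) = 1"
  shows "(1 / (2 * real N)) ^ (2 * d) / (2 * real r) \<le> eval (perturbed_form N d H r) x"
proof -
  define s where "s = (\<Sum>i<N. (x (2 * i) - x (2 * i + 1)) ^ 2)"
  define q where "q = (\<Sum>i<N. x (2 * i) ^ 2 + x (2 * i + 1) ^ 2)"
  have "0 \<le> s"
    unfolding s_def by (rule sum_nonneg) simp
  have "sqrt s ^ (4 * d) = (sqrt s ^ 2) ^ (2 * d)"
    by (simp flip: power_mult)
  then have "sqrt s ^ (4 * d) = s ^ (2 * d)"
    using \<open>0 \<le> s\<close> by simp
  then have "c * s ^ (2 * d) \<le> eval H (\<lambda>i. x (2 * i) - x (2 * i + 1))"
    using H[of "\<lambda>i. x (2 * i) - x (2 * i + 1)"] by (simp add: s_def)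
  moreover have "1 / real r * s ^ (2 * d) \<le> c * s ^ (2 * d)"
    using r \<open>0 \<le> s\<close> by (intro mult_right_mono) (simp_all add: divide_le_eq mult.commute)
  moreover have "(1 / (2 * real N)) ^ (2 * d) \<le> q ^ (2 * d)"
  proof (rule power_mono)
    have "q = (\<Sum>j<2 * N. x j ^ 2)"
      unfolding q_def sum_lessThan_double by (simp add: sum.distrib)
    moreover have "(\<Sum>j<2 * N. x j) ^ 2 \<le> (\<Sum>j<2 * N. x j ^ 2) * real (card {..<2 * N})"
      by (rule sum_squared_le_sum_of_squares)
    ultimately show "1 / (2 * real N) \<le> q"
      using x(2) N by (simp add: divide_le_eq mult.commute)
  qed (use N in simp)
  then have "(1 / (2 * real N)) ^ (2 * d) / (2 * real r) \<le> 1 / (2 * real r) * q ^ (2 * d)"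
    by (simp add: divide_right_mono)
  ultimately show ?thesis
    unfolding eval_perturbed_form s_def[symmetric] q_def[symmetric] by linarith
qed

theorem perturbed_form_polya:
  assumes H: "homogeneous (4 * d) {..<N} H" and d: "1 \<le> d" and N: "1 \<le> N"
    and pos: "\<And>z. (\<Sum>i<N. z i ^ 2) \<noteq> 0 \<Longrightarrow> 0 < eval H z"
  shows "\<exists>r>0. nonneg_coeffs (perturbed_form N d H r * var_sum {..<2 * N} ^ (r ^ 2))"
proof -
  let ?D = "4 * d"
  obtain c where c: "0 < c" "\<And>z. c * sqrt (\<Sum>i<N. z i ^ 2) ^ ?D \<le> eval H z"
    using homogeneous_pos_lower_bound[OF H _ N pos] d by auto
  obtain K L where K: "finite K" "\<And>r. Poly_Mapping.keys (perturbed_form N d H r) \<subseteq> K"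
    "\<And>r. 1 \<le> r \<Longrightarrow> (\<Sum>\<beta>\<in>K. \<bar>Poly_Mapping.lookup (perturbed_form N d H r) \<beta>\<bar>) \<le> L"
    using perturbed_form_coeffs_bounded[of N d H] by blast
  define \<kappa> where "\<kappa> = (1 / (2 * real N)) ^ (2 * d)"
  have "0 < \<kappa>"
    using N by (simp add: \<kappa>_def)
  define r where "r = nat \<lceil>max (1 / c) (2 * L * real ?D ^ 2 / \<kappa>)\<rceil> + 1"
  have r: "0 < r" "1 / c \<le> real r" "2 * L * real ?D ^ 2 / \<kappa> \<le> real r"
    unfolding r_def by linarith+
  have "L * real ?D ^ 2 \<le> real r * \<kappa> / 2"
    using r(3) \<open>0 < \<kappa>\<close> by (simp add: divide_le_eq mult.commute)
  also have "\<dots> = real (r ^ 2) * (\<kappa> / (2 * real r))"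
    using r(1) by (simp add: power2_eq_square)
  also have "\<dots> \<le> real (r ^ 2 + ?D) * (\<kappa> / (2 * real r))"
    using \<open>0 < \<kappa>\<close> by (intro mult_right_mono) auto
  finally have big: "L * real ?D ^ 2 \<le> real (r ^ 2 + ?D) * (\<kappa> / (2 * real r))" .
  have "\<kappa> / (2 * real r) \<le> eval (perturbed_form N d H r) x"
    if "\<forall>i. 0 \<le> x i" "(\<Sum>i\<in>{..<2 * N}. x i) = 1" for x
    unfolding \<kappa>_def using perturbed_form_ge_on_simplex[OF c(2) r(2) c(1) r(1) N] that by simp
  then have "nonneg_coeffs (perturbed_form N d H r * var_sum {..<2 * N} ^ (r ^ 2))"
    using d r(1) by (intro polya_nonneg_coeffs[OF _ homogeneous_perturbed_form[OF H] _ K(1,2) K(3) _ big]) auto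
  then show ?thesis
    using r(1) by blast
qed

section \<open>The form \<open>h\<close>\<close>

lemma degree_bounds:
  fixes m d :: nat
  assumes "d = max 1 ((Max (insert (total_deg p) (total_deg ` g ` {1..m})) + 1) div 2)"
  shows "1 \<le> d" "\<forall>\<alpha>\<in>Poly_Mapping.keys p. mon_deg \<alpha> \<le> 2 * d"
    "\<forall>i\<in>{1..m}. \<forall>\<alpha>\<in>Poly_Mapping.keys (g i). mon_deg \<alpha> \<le> 2 * d"
proof -
  let ?degs = "insert (total_deg p) (total_deg ` g ` {1..m})"
  have "Max ?degs \<le> 2 * d"
    using assms by linarith
  moreover have "k \<le> Max ?degs" if "k \<in> ?degs" for k
    using that by (intro Max_ge) auto
  ultimately have le_Max: "k \<in> ?degs \<Longrightarrow> k \<le> 2 * d" for k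
    by fastforce
  show "1 \<le> d"
    using assms by simp
  show "\<forall>\<alpha>\<in>Poly_Mapping.keys p. mon_deg \<alpha> \<le> 2 * d"
    using le_Max mon_deg_le_total_deg by (meson insertI1 order_trans)
  show "\<forall>i\<in>{1..m}. \<forall>\<alpha>\<in>Poly_Mapping.keys (g i). mon_deg \<alpha> \<le> 2 * d"
    using le_Max mon_deg_le_total_deg by (meson imageI insertI2 order_trans)
qed

lemma eval_homog_at_one: "z y = 1 \<Longrightarrow> eval (homog k q (var y)) z = eval q z"
  by (simp add: homog_def) (simp add: eval_def)

lemma sum_squares_eq_0:
  fixes a c :: real
  assumes "a ^ 2 + (\<Sum>i\<in>I. b i ^ 2) + c ^ 2 = 0" "finite I"
  shows "a = 0" "\<forall>i\<in>I. b i = 0" "c = 0"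
proof -
  have "0 \<le> (\<Sum>i\<in>I. b i ^ 2)"
    by (rule sum_nonneg) simp
  then have "a ^ 2 = 0" "(\<Sum>i\<in>I. b i ^ 2) = 0" "c ^ 2 = 0"
    using assms(1) zero_le_power2[of a] zero_le_power2[of c] by linarith+
  then show "a = 0" "c = 0" "\<forall>i\<in>I. b i = 0"
    using sum_nonneg_eq_0_iff[OF assms(2), of "\<lambda>i. b i ^ 2"] by auto
qed

locale hform_setting =
  fixes n m d :: nat and p :: mpoly and g :: "nat \<Rightarrow> mpoly"
  assumes vars_p: "\<forall>\<alpha>\<in>Poly_Mapping.keys p. Poly_Mapping.keys \<alpha> \<subseteq> {..<n}"
    and vars_g: "\<forall>i\<in>{1..m}. \<forall>\<alpha>\<in>Poly_Mapping.keys (g i). Poly_Mapping.keys \<alpha> \<subseteq> {..<n}"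
    and d_pos: "1 \<le> d"
    and deg_p: "\<forall>\<alpha>\<in>Poly_Mapping.keys p. mon_deg \<alpha> \<le> 2 * d"
    and deg_g: "\<forall>i\<in>{1..m}. \<forall>\<alpha>\<in>Poly_Mapping.keys (g i). mon_deg \<alpha> \<le> 2 * d"
begin

abbreviation "y_var \<equiv> var (n + m + 2)"

lemma homogeneous_hform: "homogeneous (4 * d) {..<n + m + 3} (hform n m d p g R \<eta> \<beta>)"
proof -
  let ?V = "{..<n + m + 3}"
  have y: "homogeneous k ?V (y_var ^ k)" for k
    by (rule homogeneous_var_power) simp
  have s: "homogeneous (2 * d) ?V (var (n + i) ^ 2 * y_var ^ (2 * d - 2))" if "i \<le> m + 1" for i
  proof -
    have "homogeneous (2 + (2 * d - 2)) ?V (var (n + i) ^ 2 * y_var ^ (2 * d - 2))"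
      using that by (intro homogeneous_mult homogeneous_var_power y) simp
    moreover have "2 + (2 * d - 2) = 2 * d"
      using d_pos by simp
    ultimately show ?thesis
      by metis
  qed
  have "homogeneous (2 * d) ?V (homog (2 * d) p y_var)"
    by (rule homogeneous_homog) (use vars_p deg_p in force)+
  moreover have "homogeneous (2 * d) ?V (homog (2 * d) (g i) y_var)" if "i \<in> {1..m}" for i
    by (rule homogeneous_homog) (use vars_g deg_g that in force)+
  moreover have "homogeneous 2 ?V ((\<Sum>j<n. var j ^ 2) + (\<Sum>i=0..m. var (n + i) ^ 2))"
    by (intro homogeneous_add homogeneous_sum homogeneous_var_power) auto
  then have "homogeneous (2 * d) ?V (((\<Sum>j<n. var j ^ 2) + (\<Sum>i=0..m. var (n + i) ^ 2)) ^ d)"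
    using homogeneous_power by fastforce
  ultimately show ?thesis
    unfolding hform_def Let_def
    by (intro homogeneous_add homogeneous_diff homogeneous_sum homogeneous_square[of "2 * d", simplified]
        homogeneous_const_mult s y homogeneous_var_power) auto
qed

lemma eval_hform:
  "eval (hform n m d p g R \<eta> \<beta>) z =
    (eval (homog (2 * d) p y_var) z + z n ^ 2 * z (n + m + 2) ^ (2 * d - 2)) ^ 2
    + (\<Sum>i=1..m. (eval (homog (2 * d) (g i) y_var) z - z (n + i) ^ 2 * z (n + m + 2) ^ (2 * d - 2)) ^ 2)
    + ((R + (\<Sum>i=1..m. \<eta> i) + \<beta>) ^ d * z (n + m + 2) ^ (2 * d)
        - ((\<Sum>j<n. z j ^ 2) + (\<Sum>i=0..m. z (n + i) ^ 2)) ^ d - z (n + (m + 1)) ^ (2 * d)) ^ 2"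
  by (simp add: hform_def Let_def)

lemma eval_hform_at_y_one:
  assumes "z (n + m + 2) = 1"
  shows "eval (hform n m d p g R \<eta> \<beta>) z =
    (eval p z + z n ^ 2) ^ 2 + (\<Sum>i=1..m. (eval (g i) z - z (n + i) ^ 2) ^ 2)
    + ((R + (\<Sum>i=1..m. \<eta> i) + \<beta>) ^ d - ((\<Sum>j<n. z j ^ 2) + (\<Sum>i=0..m. z (n + i) ^ 2)) ^ d
        - z (n + (m + 1)) ^ (2 * d)) ^ 2"
  using assms by (simp add: eval_hform eval_homog_at_one)

lemma eval_hform_nonneg: "0 \<le> eval (hform n m d p g R \<eta> \<beta>) z"
  unfolding eval_hform by (intro add_nonneg_nonneg sum_nonneg) auto

lemma eval_restrict_vars:
  shows "eval p (\<lambda>i. if i < n then z i else 0) = eval p z"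
    and "i \<in> {1..m} \<Longrightarrow> eval (g i) (\<lambda>i. if i < n then z i else 0) = eval (g i) z"
proof -
  show "eval p (\<lambda>i. if i < n then z i else 0) = eval p z"
    by (rule eval_cong_vars[OF vars_p]) simp
  assume "i \<in> {1..m}"
  then have "\<forall>\<alpha>\<in>Poly_Mapping.keys (g i). Poly_Mapping.keys \<alpha> \<subseteq> {..<n}"
    using vars_g by blast
  then show "eval (g i) (\<lambda>i. if i < n then z i else 0) = eval (g i) z"
    by (rule eval_cong_vars) simp
qed
lemma hform_zero_at_y_one:
  assumes "eval (hform n m d p g R \<eta> \<beta>) z = 0" "z (n + m + 2) = 1"
  obtains x where "x \<in> semialg n m g" "eval p x \<le> 0"
proof -
  let ?x = "\<lambda>i. if i < n then z i else 0"
  have "(eval p z + z n ^ 2) ^ 2 + (\<Sum>i=1..m. (eval (g i) z - z (n + i) ^ 2) ^ 2)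
    + ((R + (\<Sum>i=1..m. \<eta> i) + \<beta>) ^ d - ((\<Sum>j<n. z j ^ 2) + (\<Sum>i=0..m. z (n + i) ^ 2)) ^ d
        - z (n + (m + 1)) ^ (2 * d)) ^ 2 = 0"
    using assms eval_hform_at_y_one by simp
  from sum_squares_eq_0(1,2)[OF this]
  have sq: "eval p z = - (z n ^ 2)" "\<And>i. i \<in> {1..m} \<Longrightarrow> eval (g i) z = z (n + i) ^ 2"
    by auto
  have "?x \<in> semialg n m g"
    using sq(2) eval_restrict_vars(2) by (simp add: semialg_def)
  moreover have "eval p ?x \<le> 0"
    using sq(1) eval_restrict_vars(1) by simp
  ultimately show ?thesis
    by (rule that)
qed

lemma hform_zero_at_y_zero:
  assumes "eval (hform n m d p g R \<eta> \<beta>) z = 0" "z (n + m + 2) = 0"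
  shows "(\<Sum>i<n + m + 3. z i ^ 2) = 0"
proof -
  let ?X = "(\<Sum>j<n. z j ^ 2) + (\<Sum>i=0..m. z (n + i) ^ 2)"
  have "(R + (\<Sum>i=1..m. \<eta> i) + \<beta>) ^ d * z (n + m + 2) ^ (2 * d) - ?X ^ d - z (n + (m + 1)) ^ (2 * d) = 0"
    using assms(1) unfolding eval_hform by (rule sum_squares_eq_0(3)) simp
  moreover have "(R + (\<Sum>i=1..m. \<eta> i) + \<beta>) ^ d * z (n + m + 2) ^ (2 * d) = 0"
    using assms(2) d_pos by simp
  moreover have "0 \<le> ?X"
    by (intro add_nonneg_nonneg sum_nonneg) auto
  moreover have "0 \<le> z (n + (m + 1)) ^ (2 * d)"
    by (simp add: power_mult)
  ultimately have "?X ^ d = 0" "z (n + (m + 1)) ^ (2 * d) = 0"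
    using zero_le_power[of ?X d] by linarith+
  then have "?X = 0" and last: "z (n + m + 1) = 0"
    by simp_all
  then have x: "\<forall>j<n. z j = 0" and s: "\<forall>i\<le>m. z (n + i) = 0"
    by (simp_all add: add_nonneg_eq_0_iff sum_nonneg sum_nonneg_eq_0_iff)
  have "z i = 0" if i: "i < n + m + 3" for i
  proof (cases "i < n")
    case False
    then obtain k where "i = n + k" "k \<le> m \<or> k = m + 1 \<or> k = m + 2"
    proof -
      have "i = n + (i - n)" "i - n \<le> m \<or> i - n = m + 1 \<or> i - n = m + 2"
        using False i by linarith+
      then show ?thesis
        using that by blast
    qed
    then show ?thesis
      using s last assms(2) by (auto simp: add.assoc)
  qed (use x in simp)
  then show ?thesis
    by simp
qed
lemma hform_pos:
  assumes pos: "\<forall>x\<in>semialg n m g. 0 < eval p x" and nonzero: "(\<Sum>i<n + m + 3. z i ^ 2) \<noteq> 0"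
  shows "0 < eval (hform n m d p g R \<eta> \<beta>) z"
proof (rule ccontr)
  let ?H = "hform n m d p g R \<eta> \<beta>"
  assume "\<not> 0 < eval ?H z"
  then have zero: "eval ?H z = 0"
    using eval_hform_nonneg[of R \<eta> \<beta> z] by linarith
  show False
  proof (cases "z (n + m + 2) = 0")
    case True
    then show False
      using hform_zero_at_y_zero[OF zero] nonzero by simp
  next
    case False
    let ?z = "\<lambda>i. (1 / z (n + m + 2)) * z i"
    have "eval ?H ?z = (1 / z (n + m + 2)) ^ (4 * d) * eval ?H z"
      by (rule eval_homogeneous_scale[OF homogeneous_hform])
    then have "eval ?H ?z = 0"
      using zero by simp
    moreover have "?z (n + m + 2) = 1"
      using False by simp
    ultimately obtain x where "x \<in> semialg n m g" "eval p x \<le> 0"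
      by (rule hform_zero_at_y_one)
    then show False
      using pos by fastforce
  qed
qed


lemma hform_zero_of_nonpos_point:
  assumes R_bound: "\<forall>x\<in>semialg n m g. (\<Sum>j<n. x j ^ 2) \<le> R"
    and eta_bound: "\<forall>i\<in>{1..m}. \<forall>x\<in>semialg n m g. eval (g i) x \<le> \<eta> i"
    and beta_bound: "\<forall>x\<in>semialg n m g. - eval p x \<le> \<beta>"
    and x: "x \<in> semialg n m g" "eval p x \<le> 0"
  obtains z where "z (n + m + 2) = 1" "eval (hform n m d p g R \<eta> \<beta>) z = 0"
proof -
  let ?T = "R + (\<Sum>i=1..m. \<eta> i) + \<beta>"
  \<comment> \<open>Slack values \<open>s\<^sub>0\<^sup>2 = -p(x)\<close>, \<open>s\<^sub>i\<^sup>2 = g\<^sub>i(x)\<close>; \<open>t = s\<^sub>m\<^sub>+\<^sub>1\<close> absorbs the gap below \<open>T\<^sup>d\<close>.\<close>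
  define s where "s i = (if i = 0 then sqrt (- eval p x) else sqrt (eval (g i) x))" for i
  have s0: "s 0 ^ 2 = - eval p x"
    using x(2) by (simp add: s_def)
  have si: "s i ^ 2 = eval (g i) x" if "i \<in> {1..m}" for i
    using x(1) that by (simp add: s_def semialg_def)
  define A where "A = (\<Sum>j<n. x j ^ 2) + (\<Sum>i=0..m. s i ^ 2)"
  have "(\<Sum>i=0..m. s i ^ 2) = - eval p x + (\<Sum>i=1..m. eval (g i) x)"
    using s0 si by (simp add: sum.atLeast_Suc_atMost)
  moreover have "(\<Sum>i=1..m. eval (g i) x) \<le> (\<Sum>i=1..m. \<eta> i)"
    using eta_bound x(1) by (intro sum_mono) auto
  ultimately have "A \<le> ?T"
    using R_bound beta_bound x(1) unfolding A_def by fastforce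
  moreover have "0 \<le> A"
    unfolding A_def by (intro add_nonneg_nonneg sum_nonneg) auto
  ultimately have "0 \<le> ?T ^ d - A ^ d"
    using power_mono[of A ?T d] by simp
  then obtain t where t: "t ^ (2 * d) = ?T ^ d - A ^ d"
    using real_root_pow_pos2[of "2 * d" "?T ^ d - A ^ d"] d_pos by fastforce
  define z where "z i = (if i < n then x i else if i \<le> n + m then s (i - n)
      else if i = n + m + 1 then t else if i = n + m + 2 then 1 else 0)" for i
  have y: "z (n + m + 2) = 1" and zs: "\<And>i. i \<le> m \<Longrightarrow> z (n + i) = s i"
    and zt: "z (n + (m + 1)) = t"
    by (simp_all add: z_def)
  have restrict: "(\<lambda>i. if i < n then z i else 0) = x"
    using x(1) by (auto simp: z_def semialg_def)
  have "eval p z = eval p x" "\<And>i. i \<in> {1..m} \<Longrightarrow> eval (g i) z = eval (g i) x"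
    using eval_restrict_vars[where z = z, unfolded restrict] by simp_all
  moreover have "(\<Sum>j<n. z j ^ 2) + (\<Sum>i=0..m. z (n + i) ^ 2) = A"
    by (simp add: A_def zs z_def)
  ultimately have "eval (hform n m d p g R \<eta> \<beta>) z = 0"
    using zs[of 0] zt s0 t by (simp add: eval_hform_at_y_one[of z R \<eta> \<beta>, OF y] zs si)
  with y show ?thesis
    by (rule that)
qed

lemma eval_certificate:
  "eval (certificate n m d p g R \<eta> \<beta> r) P =
    (eval (hform n m d p g R \<eta> \<beta>) (\<lambda>i. P (2 * i) ^ 2 - P (2 * i + 1) ^ 2)
      - 1 / real r * (\<Sum>i<n + m + 3. (P (2 * i) ^ 2 - P (2 * i + 1) ^ 2) ^ 2) ^ (2 * d)
      + 1 / (2 * real r) * (\<Sum>i<n + m + 3. P (2 * i) ^ 4 + P (2 * i + 1) ^ 4) ^ (2 * d))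
    * ((\<Sum>i<n + m + 3. P (2 * i) ^ 2) + (\<Sum>i<n + m + 3. P (2 * i + 1) ^ 2)) ^ (r ^ 2)"
  by (simp add: certificate_def Let_def eval_subst vv_def ww_def)

text \<open>At a real zero \<open>z\<close> of \<open>h\<close>, write each \<open>z\<^sub>i = v\<^sub>i\<^sup>2 - w\<^sub>i\<^sup>2\<close> with \<open>v\<^sub>i w\<^sub>i = 0\<close>; then
  \<open>\<Sigma> (v\<^sub>i\<^sup>4 + w\<^sub>i\<^sup>4) = \<Sigma> z\<^sub>i\<^sup>2\<close>, so only the negative term \<open>-|z|\<^sup>4\<^sup>d/(2r)\<close> survives.\<close>

lemma certificate_negative_at_zero:
  assumes "eval (hform n m d p g R \<eta> \<beta>) z = 0" "z (n + m + 2) = 1" "0 < r"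
  obtains P where "\<And>j. 0 \<le> P j" "eval (certificate n m d p g R \<eta> \<beta> r) P < 0"
proof -
  let ?N = "n + m + 3"
  have parts: "sqrt (max a 0) ^ 2 - sqrt (max (- a) 0) ^ 2 = a"
    "sqrt (max a 0) ^ 4 + sqrt (max (- a) 0) ^ 4 = a ^ 2"
    "sqrt (max a 0) ^ 2 + sqrt (max (- a) 0) ^ 2 = \<bar>a\<bar>" for a :: real
  proof -
    have "x ^ 4 = (x ^ 2) ^ 2" for x :: real
      by simp
    then show "sqrt (max a 0) ^ 2 - sqrt (max (- a) 0) ^ 2 = a"
      "sqrt (max a 0) ^ 4 + sqrt (max (- a) 0) ^ 4 = a ^ 2"
      "sqrt (max a 0) ^ 2 + sqrt (max (- a) 0) ^ 2 = \<bar>a\<bar>"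
      by (simp_all only: real_sqrt_pow2 max.cobounded2) (simp_all add: max_def)
  qed
  define P where "P j = (if even j then sqrt (max (z (j div 2)) 0) else sqrt (max (- z (j div 2)) 0))" for j
  have P: "P (2 * i) = sqrt (max (z i) 0)" "P (2 * i + 1) = sqrt (max (- z i) 0)" for i
    by (simp_all add: P_def)
  define \<sigma> where "\<sigma> = (\<Sum>i<?N. z i ^ 2)"
  have "z (n + m + 2) ^ 2 \<le> \<sigma>"
    unfolding \<sigma>_def by (rule member_le_sum) auto
  then have "0 < \<sigma>"
    using assms(2) by simp
  have "\<bar>z (n + m + 2)\<bar> \<le> (\<Sum>i<?N. \<bar>z i\<bar>)"
    by (rule member_le_sum) auto
  then have "0 < (\<Sum>i<?N. \<bar>z i\<bar>)"
    using assms(2) by simp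
  have "eval (certificate n m d p g R \<eta> \<beta> r) P = - (\<sigma> ^ (2 * d) / (2 * real r)) * (\<Sum>i<?N. \<bar>z i\<bar>) ^ (r ^ 2)"
    unfolding eval_certificate P parts sum.distrib[symmetric] \<sigma>_def[symmetric] assms(1)
    using assms(3) by (simp add: field_simps)
  also have "\<dots> < 0"
    using \<open>0 < \<sigma>\<close> \<open>0 < (\<Sum>i<?N. \<bar>z i\<bar>)\<close> assms(3) by (intro mult_neg_pos) auto
  finally show ?thesis
    by (rule that[rotated]) (simp add: P_def)
qed

theorem semialg_pos_if_certificate:
  assumes R_bound: "\<forall>x\<in>semialg n m g. (\<Sum>j<n. x j ^ 2) \<le> R"
    and eta_bound: "\<forall>i\<in>{1..m}. \<forall>x\<in>semialg n m g. eval (g i) x \<le> \<eta> i"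
    and beta_bound: "\<forall>x\<in>semialg n m g. - eval p x \<le> \<beta>"
    and r: "0 < r" "nonneg_coeffs (certificate n m d p g R \<eta> \<beta> r)"
  shows "\<forall>x\<in>semialg n m g. 0 < eval p x"
proof (rule ccontr)
  assume "\<not> ?thesis"
  then obtain x where "x \<in> semialg n m g" "eval p x \<le> 0"
    by (auto simp: not_less)
  then obtain z where z: "z (n + m + 2) = 1" "eval (hform n m d p g R \<eta> \<beta>) z = 0"
    using hform_zero_of_nonpos_point[OF R_bound eta_bound beta_bound] by blast
  obtain P where "\<And>j. 0 \<le> P j" "eval (certificate n m d p g R \<eta> \<beta> r) P < 0"
    using certificate_negative_at_zero[OF z(2,1) r(1)] by blast
  moreover from this(1) have "0 \<le> eval (certificate n m d p g R \<eta> \<beta> r) P"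
    by (rule eval_nonneg_if_nonneg_coeffs[OF r(2)])
  ultimately show False
    by simp
qed

lemma certificate_eq_subst_perturbed_form:
  "certificate n m d p g R \<eta> \<beta> r =
     subst (perturbed_form (n + m + 3) d (hform n m d p g R \<eta> \<beta>) r * var_sum {..<2 * (n + m + 3)} ^ (r ^ 2))
       (\<lambda>j. var j ^ 2)"
proof -
  have "(x ^ 2) ^ 2 = x ^ 4" for x :: mpoly
    by (simp flip: power_mult)
  moreover have squares: "subst (var_sum {..<2 * N}) (\<lambda>j. var j ^ 2) =
      (\<Sum>i<N. var (2 * i) ^ 2) + (\<Sum>i<N. var (2 * i + 1) ^ 2)" for N
    by (simp add: var_sum_def sum_lessThan_double)
  ultimately show ?thesis
    unfolding subst_mult subst_power squares
    by (simp add: certificate_def Let_def perturbed_form_def subst_subst vv_def ww_def)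
qed

theorem certificate_if_semialg_pos:
  assumes "\<forall>x\<in>semialg n m g. 0 < eval p x"
  shows "\<exists>r>0. nonneg_coeffs (certificate n m d p g R \<eta> \<beta> r)"
proof -
  obtain r where "0 < r"
    "nonneg_coeffs (perturbed_form (n + m + 3) d (hform n m d p g R \<eta> \<beta>) r * var_sum {..<2 * (n + m + 3)} ^ (r ^ 2))"
    using perturbed_form_polya[OF homogeneous_hform[of R \<eta> \<beta>] d_pos _ hform_pos[OF assms]] by auto
  then show ?thesis
    unfolding certificate_eq_subst_perturbed_form
    by (blast intro: nonneg_coeffs_subst nonneg_coeffs_power nonneg_coeffs_var)
qed

end

theorem corollary4p4:
  fixes n m d :: nat and p :: mpoly and g :: "nat \<Rightarrow> mpoly"
    and R \<beta> :: real and \<eta> :: "nat \<Rightarrow> real"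
  assumes vars_p: "\<forall>\<alpha>\<in>Poly_Mapping.keys p. Poly_Mapping.keys \<alpha> \<subseteq> {..<n}"
    and vars_g: "\<forall>i\<in>{1..m}. \<forall>\<alpha>\<in>Poly_Mapping.keys (g i). Poly_Mapping.keys \<alpha> \<subseteq> {..<n}"
    and d_def: "d = max 1 ((Max (insert (total_deg p) (total_deg ` g ` {1..m})) + 1) div 2)"
    and R_pos: "R > 0"
    and R_bound: "\<forall>x\<in>semialg n m g. (\<Sum>j<n. x j ^ 2) \<le> R"
    and eta_bound: "\<forall>i\<in>{1..m}. \<forall>x\<in>semialg n m g. eval (g i) x \<le> \<eta> i"
    and beta_bound: "\<forall>x\<in>semialg n m g. - eval p x \<le> \<beta>"
  shows "(\<forall>x\<in>semialg n m g. eval p x > 0) \<longleftrightarrow>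
         (\<exists>r::nat. r > 0 \<and>
            (\<forall>\<alpha>. 0 \<le> Poly_Mapping.lookup (certificate n m d p g R \<eta> \<beta> r) \<alpha>))"
proof -
  interpret hform_setting n m d p g
    using vars_p vars_g degree_bounds[OF d_def] by unfold_locales
  show ?thesis
    using certificate_if_semialg_pos semialg_pos_if_certificate[OF R_bound eta_bound beta_bound]
    unfolding nonneg_coeffs_def by blast
qed

end
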